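(* Let $a,d\in\mathbb N$, $\mu\in\mathbb R$, $\delta=\mu\sigma_d$. Let $\chi,\chi'$ be dominant weights with $\chi+\rho+\delta,\ \chi'+\rho+\delta\in\mathbf V^a(1,d)$, let $e=e(\chi)$, $e'=e(\chi')$, and let $I$ be a sub-multiset of $\mathcal W^a_{e'}$. Assume $\chi'-\sigma_I+\rho$ has pairwise distinct coordinates, and let $(\chi'-\sigma_I)^+$ be the dominant weight with $(\chi'-\sigma_I)^++\rho=w(\chi'-\sigma_I+\rho)$ for some $w\in\mathfrak S_d$; then $(\chi'-\sigma_I)^++\rho+\delta\in\mathbf V^a(1,d)$, and let $e''=e((\chi'-\sigma_I)^+)$. Suppose that either (i) $p(\chi')>p(\chi)$; or (ii) $p(\chi')=p(\chi)$ and $e'<e$; or (iii) $p(\chi')=p(\chi)$, $e'=e$ and $I\ne\emptyset$. Then \[ p_e((\chi'-\sigma_I)^+)\ge p((\chi'-\sigma_I)^+)\ge p(\chi). \] Moreover, if the second inequality is an equality then $p(\chi')=p(\chi)$ and $e''\le e'$, with $e''<e'$ if $I\neq\emptyset$; hence then $e''<e$ and the first inequality is strict. In particular, in each of the cases (i)–(iii), \[ \sum_{i\le e}\big((\chi'-\sigma_I)^+\big)_i>\sum_{i\le e}\chi_i, \] where $\psi_i$ denotes the coefficient of $\beta_i$ in $\psi$.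
   Context: $M(d)$: character lattice of the diagonal torus of $GL(d)$ with coordinate characters $\beta_1,\dots,\beta_d$; $\sum c_i\beta_i$ dominant if $c_1\le\dots\le c_d$; $\rho=\frac12\sum_{j<i}(\beta_i-\beta_j)$; $\sigma_d=\sum\beta_i$; $\mathbf V^a(1,d)=\frac32\mathrm{sum}[0,\beta_i-\beta_j]+\frac a2\mathrm{sum}[-\beta_k,\beta_k]+\mathrm{sum}[-\beta_k,0]$ (Minkowski sums over all $i,j,k$). For $0\le e\le d$, $\mathcal W^a_e$ is the multiset $\{(\beta_i-\beta_j)^{\times3},(-\beta_j)^{\times a}: j\le e<i\}$ (the weights of $V^{\oplus a}\oplus(V^\vee)^{\oplus a}\oplus\mathfrak{gl}(V)^{\oplus3}$ on which the cocharacter $(t,\dots,t,1,\dots,1)$, $e$ entries $t$, acts negatively); $\sigma_I=\sum_{\beta\in I}\beta$. For dominant $\psi$ with $\psi+\rho+\delta\in\mathbf V^a(1,d)$, $e(\psi)$ is the unique $0\le e\le d$ with $\psi+\rho+\delta=\sum_{j<i\le e}c_{ij}(\beta_i-\beta_j)+\sum_{e<j<i}c_{ij}(\beta_i-\beta_j)+\sum_{j\le e<i}\frac32(\beta_i-\beta_j)+\sum_ic_i\beta_i$, $0\le c_{ij}\le\frac32$, $-\frac{a+2}2\le c_i\le-\frac a2$ ($i\le e$), $-\frac a2<c_i\le\frac a2$ ($i>e$). For a weight $\psi$, with $\psi+\rho+\delta=\sum b_i\beta_i$, $p_l(\psi):=\sum_{i\le l}b_i+\frac32l(d-l)+\frac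 a2l$, and $p(\psi):=p_{e(\psi)}(\psi)$. *)

theory Defs
  imports Complex_Main "HOL-Library.Multiset"
begin

text \<open>Weights of the diagonal torus of GL(d) (tensored with the reals) are represented
  as functions nat \<Rightarrow> real; only the coordinates 1..d (coefficients of
  beta_1..beta_d) are meaningful.\<close>

definition beta :: "nat \<Rightarrow> nat \<Rightarrow> real" where
  "beta i = (\<lambda>m. if m = i then 1 else 0)"

definition rho :: "nat \<Rightarrow> nat \<Rightarrow> real" where
  "rho d = (\<lambda>m. (1/2) * (\<Sum>i\<in>{1..d}. \<Sum>j\<in>{1..d}.
              if j < i then beta i m - beta j m else 0))"

text \<open>delta = mu * sigma_d\<close>
definition delta :: "real \<Rightarrow> nat \<Rightarrow> real" where
  "delta mu = (\<lambda>m. mu)"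

definition dominant :: "nat \<Rightarrow> (nat \<Rightarrow> real) \<Rightarrow> bool" where
  "dominant d c \<longleftrightarrow> (\<forall>i j. 1 \<le> i \<longrightarrow> i \<le> j \<longrightarrow> j \<le> d \<longrightarrow> c i \<le> c j)"

definition dominant_weight :: "nat \<Rightarrow> (nat \<Rightarrow> real) \<Rightarrow> bool" where
  "dominant_weight d c \<longleftrightarrow> (\<forall>i\<in>{1..d}. c i \<in> \<int>) \<and> dominant d c"

text \<open>The zonotope V^a(1,d) = 3/2 sum[0,beta_i-beta_j] + a/2 sum[-beta_k,beta_k] + sum[-beta_k,0]
  (Minkowski sums of segments over all i, j, k in 1..d).\<close>
definition Vzon :: "nat \<Rightarrow> nat \<Rightarrow> (nat \<Rightarrow> real) set" where
  "Vzon a d = {x. \<exists>t u v.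
      (\<forall>i j. 0 \<le> t i j \<and> t i j \<le> 1) \<and>
      (\<forall>k. -1 \<le> u k \<and> u k \<le> 1) \<and>
      (\<forall>k. 0 \<le> v k \<and> v k \<le> 1) \<and>
      (\<forall>m\<in>{1..d}. x m =
          (\<Sum>i\<in>{1..d}. \<Sum>j\<in>{1..d}. t i j * ((3/2) * (beta i m - beta j m)))
        + (\<Sum>k\<in>{1..d}. u k * ((real a / 2) * beta k m))
        + (\<Sum>k\<in>{1..d}. v k * (- beta k m)))}"

definition shifted :: "nat \<Rightarrow> real \<Rightarrow> (nat \<Rightarrow> real) \<Rightarrow> nat \<Rightarrow> real" where
  "shifted d mu psi = (\<lambda>m. psi m + rho d m + delta mu m)"

definition e_decomp :: "nat \<Rightarrow> nat \<Rightarrow> (nat \<Rightarrow> real) \<Rightarrow> nat \<Rightarrow> bool" where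
  "e_decomp a d x e \<longleftrightarrow> (\<exists>c cc.
      (\<forall>i j. 0 \<le> c i j \<and> c i j \<le> 3/2) \<and>
      (\<forall>i. 1 \<le> i \<longrightarrow> i \<le> e \<longrightarrow> -(real a + 2)/2 \<le> cc i \<and> cc i \<le> - real a / 2) \<and>
      (\<forall>i. e < i \<longrightarrow> i \<le> d \<longrightarrow> - real a / 2 < cc i \<and> cc i \<le> real a / 2) \<and>
      (\<forall>m\<in>{1..d}. x m =
          (\<Sum>i\<in>{1..d}. \<Sum>j\<in>{1..d}.
              if j < i \<and> i \<le> e then c i j * (beta i m - beta j m) else 0)
        + (\<Sum>i\<in>{1..d}. \<Sum>j\<in>{1..d}.
              if e < j \<and> j < i then c i j * (beta i m - beta j m) else 0)
        + (\<Sum>i\<in>{1..d}. \<Sum>j\<in>{1..d}.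
              if j \<le> e \<and> e < i then (3/2) * (beta i m - beta j m) else 0)
        + (\<Sum>i\<in>{1..d}. cc i * beta i m)))"

definition e_of :: "nat \<Rightarrow> nat \<Rightarrow> real \<Rightarrow> (nat \<Rightarrow> real) \<Rightarrow> nat" where
  "e_of a d mu psi = (THE e. e \<le> d \<and> e_decomp a d (shifted d mu psi) e)"

definition p_l :: "nat \<Rightarrow> nat \<Rightarrow> real \<Rightarrow> nat \<Rightarrow> (nat \<Rightarrow> real) \<Rightarrow> real" where
  "p_l a d mu l psi = (\<Sum>i\<in>{1..l}. shifted d mu psi i)
      + (3/2) * real l * (real d - real l) + (real a / 2) * real l"

definition p_of :: "nat \<Rightarrow> nat \<Rightarrow> real \<Rightarrow> (nat \<Rightarrow> real) \<Rightarrow> real" where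
  "p_of a d mu psi = p_l a d mu (e_of a d mu psi) psi"

definition W_ms :: "nat \<Rightarrow> nat \<Rightarrow> nat \<Rightarrow> (nat \<Rightarrow> real) multiset" where
  "W_ms a d e =
     (\<Sum>j\<in>{1..e}. \<Sum>i\<in>{e+1..d}. replicate_mset 3 (\<lambda>m. beta i m - beta j m))
   + (\<Sum>j\<in>{1..e}. replicate_mset a (\<lambda>m. - beta j m))"

definition sigma_ms :: "(nat \<Rightarrow> real) multiset \<Rightarrow> nat \<Rightarrow> real" where
  "sigma_ms I = (\<lambda>m. sum_mset (image_mset (\<lambda>b. b m) I))"

end

theory Submission
  imports Defs
begin

text \<open>
  A point of V^a(1,d) is the same as the net outflow of a flow on the complete digraph on
  {1..d} with capacities 3/2, plus a vector in the box [-(a+2)/2, a/2]^d. For a non-decreasing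
  point x (a shifted dominant weight) the index e(x) is the largest minimiser of
  l \<mapsto> p_l: the decomposition at e forces p_l \<ge> p_e, strictly for l > e, and conversely at the
  largest minimiser the two blocks {1..e} and {e+1..d} can be decomposed separately, because
  the inequalities between the p_l are exactly the majorisation conditions for each block.

  Subtracting sigma_I, I \<subseteq> W_{e'}, from chi'+rho+delta only lowers flows on the saturated
  edges from {e'+1..d} to {1..e'} and raises the box entries of {1..e'}. The result is again a
  signed lower triangular flow plus a box vector, so it lies in V^a(1,d), and every set S of
  l coordinates satisfies \<Sum>_S + 3/2 l(d-l) + a/2 l \<ge> p(chi'), with equality only for
  S \<subseteq> {1..e'}; for S = {1..e'} the left side exceeds p(chi') by |I|. Applied to the first l
  coordinates of the rearrangement psi this gives p_l(psi) \<ge> p(chi') \<ge> p(chi), and the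
  minimality of p at e(psi) and at e(chi) yields the remaining claims.
\<close>

section \<open>Flows and the zonotope\<close>

lemma beta_apply: "beta i m = (if m = i then 1 else 0)"
  by (simp add: beta_def)

lemma sum_mult_beta:
  assumes "m \<in> {1..d}"
  shows "(\<Sum>k\<in>{1..d}. u k * (c * beta k m)) = u m * c"
proof -
  have "(\<Sum>k\<in>{1..d}. u k * (c * beta k m)) = (\<Sum>k\<in>{1..d}. if k = m then u k * c else 0)"
    by (rule sum.cong) (auto simp: beta_apply)
  thus ?thesis using assms by (simp add: sum.delta)
qed

lemma sum_if_const:
  fixes c :: real and d :: nat
  shows "(\<Sum>i\<in>{1..d}. if P i then c else 0) = c * real (card {i\<in>{1..d}. P i})"
proof -
  have "(\<Sum>i\<in>{1..d}. if P i then c else 0) = (\<Sum>i\<in>{i\<in>{1..d}. P i}. c)"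
    by (rule sum.inter_filter[symmetric]) simp
  thus ?thesis by simp
qed

text \<open>C i j is read as the flow from i to j in the complete digraph on D.\<close>

definition net_flow :: "nat set \<Rightarrow> (nat \<Rightarrow> nat \<Rightarrow> real) \<Rightarrow> nat \<Rightarrow> real" where
  "net_flow D C m = (\<Sum>j\<in>D. C m j) - (\<Sum>i\<in>D. C i m)"

lemma sum_beta_diff_eq_net_flow:
  assumes "finite D" "m \<in> D"
  shows "(\<Sum>i\<in>D. \<Sum>j\<in>D. C i j * (beta i m - beta j m)) = net_flow D C m"
proof -
  have out: "(\<Sum>i\<in>D. \<Sum>j\<in>D. C i j * beta i m) = (\<Sum>j\<in>D. C m j)"
  proof -
    have "(\<Sum>i\<in>D. \<Sum>j\<in>D. C i j * beta i m) = (\<Sum>i\<in>D. if m = i then (\<Sum>j\<in>D. C i j) else 0)"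
      by (rule sum.cong) (auto simp: beta_apply)
    thus ?thesis using assms by (simp add: sum.delta)
  qed
  have "(\<Sum>j\<in>D. C i j * beta j m) = C i m" for i
  proof -
    have "(\<Sum>j\<in>D. C i j * beta j m) = (\<Sum>j\<in>D. if j = m then C i j else 0)"
      by (rule sum.cong) (auto simp: beta_apply)
    thus ?thesis using assms by (simp add: sum.delta)
  qed
  hence "(\<Sum>i\<in>D. \<Sum>j\<in>D. C i j * beta j m) = (\<Sum>i\<in>D. C i m)" by simp
  with out show ?thesis
    by (simp add: net_flow_def right_diff_distrib sum_subtractf)
qed

lemma sum_net_flow_subset:
  assumes "finite D" "S \<subseteq> D"
  shows "(\<Sum>m\<in>S. net_flow D C m) = (\<Sum>m\<in>S. \<Sum>j\<in>D-S. C m j) - (\<Sum>m\<in>S. \<Sum>i\<in>D-S. C i m)"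
proof -
  have split: "(\<Sum>j\<in>D. f j) = (\<Sum>j\<in>S. f j) + (\<Sum>j\<in>D-S. f j)" for f :: "nat \<Rightarrow> real"
    using assms by (metis sum.subset_diff add.commute)
  have "(\<Sum>m\<in>S. \<Sum>j\<in>S. C m j) = (\<Sum>m\<in>S. \<Sum>i\<in>S. C i m)"
    by (rule sum.swap)
  thus ?thesis by (simp add: net_flow_def split sum.distrib sum_subtractf)
qed

lemma net_flow_add: "net_flow D (\<lambda>i j. A i j + B i j) m = net_flow D A m + net_flow D B m"
  by (simp add: net_flow_def sum.distrib)

lemma net_flow_supported:
  assumes "finite D" "B \<subseteq> D" "\<And>i j. C i j \<noteq> 0 \<Longrightarrow> i \<in> B \<and> j \<in> B"
  shows "net_flow D C m = (if m \<in> B then net_flow B C m else 0)"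
proof -
  have "(\<Sum>j\<in>D. C m j) = (\<Sum>j\<in>B. C m j)" "(\<Sum>i\<in>D. C i m) = (\<Sum>i\<in>B. C i m)"
    by (rule sum.mono_neutral_right; use assms in auto)+
  moreover have "C m j = 0" "C j m = 0" if "m \<notin> B" for j using assms(3) that by blast+
  ultimately show ?thesis by (simp add: net_flow_def)
qed

lemma sum_sum_le_card:
  fixes C :: "nat \<Rightarrow> nat \<Rightarrow> real"
  assumes "\<And>i j. C i j \<le> c"
  shows "(\<Sum>i\<in>S. \<Sum>j\<in>T. C i j) \<le> c * real (card S) * real (card T)"
proof -
  have "(\<Sum>i\<in>S. \<Sum>j\<in>T. C i j) \<le> (\<Sum>i\<in>S. \<Sum>j\<in>T. c)"
    using assms by (intro sum_mono) auto
  thus ?thesis by (simp add: ac_simps)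
qed

lemma sum_net_flow_lower_bound:
  assumes bounds: "\<And>i j. -(3/2) \<le> C i j \<and> C i j \<le> 3/2"
    and lower: "\<And>i j. C i j \<noteq> 0 \<Longrightarrow> j < i" and S: "S \<subseteq> {1..d}"
  shows "(\<Sum>m\<in>S. net_flow {1..d} C m) \<ge> -(3/2) * real (card S) * (real d - real (card S))"
proof -
  have fS: "finite S" using S finite_subset by blast
  have cD: "real (card ({1..d} - S)) = real d - real (card S)"
    using S fS card_mono[OF _ S] by (simp add: card_Diff_subset of_nat_diff)
  have "C t m - C m t \<le> 3/2" for m t
    using bounds[of m t] bounds[of t m] lower[of m t] lower[of t m]
    by (cases "t < m") force+
  hence "(\<Sum>m\<in>S. \<Sum>t\<in>{1..d}-S. C t m - C m t) \<le> (3/2) * real (card S) * (real d - real (card S))"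
    using sum_sum_le_card[where C="\<lambda>m t. C t m - C m t" and c="3/2" and S=S and T="{1..d}-S"] cD
    by simp
  thus ?thesis
    using sum_net_flow_subset[of "{1..d}" S C] S by (simp add: sum_subtractf)
qed

text \<open>The segments [0, 3/2 (beta_i - beta_j)] of V^a(1,d) give the flows, the segments
  [-a/2 beta_k, a/2 beta_k] and [-beta_k, 0] the box part g.\<close>

definition flow_rep :: "nat \<Rightarrow> nat \<Rightarrow> (nat \<Rightarrow> real) \<Rightarrow> bool" where
  "flow_rep a d x \<longleftrightarrow> (\<exists>C g. (\<forall>i j. 0 \<le> C i j \<and> C i j \<le> 3/2)
      \<and> (\<forall>m. -(real a + 2)/2 \<le> g m \<and> g m \<le> real a / 2)
      \<and> (\<forall>m\<in>{1..d}. x m = net_flow {1..d} C m + g m))"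

lemma flow_rep_if_in_Vzon:
  assumes "x \<in> Vzon a d"
  shows "flow_rep a d x"
proof -
  obtain t u v where t: "\<forall>i j. 0 \<le> t i j \<and> t i j \<le> 1"
    and u: "\<forall>k. -1 \<le> u k \<and> u k \<le> 1" and v: "\<forall>k. 0 \<le> v k \<and> v k \<le> 1"
    and x: "\<forall>m\<in>{1..d}. x m = (\<Sum>i\<in>{1..d}. \<Sum>j\<in>{1..d}. t i j * ((3/2) * (beta i m - beta j m)))
        + (\<Sum>k\<in>{1..d}. u k * ((real a / 2) * beta k m)) + (\<Sum>k\<in>{1..d}. v k * (- beta k m))"
    using assms unfolding Vzon_def by blast
  define C where "C = (\<lambda>i j. (3/2) * t i j)"
  define g where "g = (\<lambda>m. u m * (real a / 2) - v m)"
  have "-(real a + 2)/2 \<le> g m \<and> g m \<le> real a / 2" for m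
  proof -
    have "-1 \<le> u m" "u m \<le> 1" "0 \<le> v m" "v m \<le> 1" using u v by auto
    moreover have "-(real a / 2) \<le> u m * (real a / 2)" "u m * (real a / 2) \<le> real a / 2"
      using mult_right_mono[of "-1" "u m" "real a / 2"] mult_right_mono[of "u m" 1 "real a / 2"]
        \<open>-1 \<le> u m\<close> \<open>u m \<le> 1\<close> by auto
    ultimately show ?thesis by (simp add: g_def)
  qed
  moreover have "\<forall>m\<in>{1..d}. x m = net_flow {1..d} C m + g m"
  proof
    fix m assume m: "m \<in> {1..d}"
    have "(\<Sum>i\<in>{1..d}. \<Sum>j\<in>{1..d}. t i j * ((3/2) * (beta i m - beta j m)))
        = (\<Sum>i\<in>{1..d}. \<Sum>j\<in>{1..d}. C i j * (beta i m - beta j m))"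
      by (intro sum.cong refl) (simp add: C_def algebra_simps)
    thus "x m = net_flow {1..d} C m + g m"
      using x m sum_mult_beta[OF m, of v "-1"] sum_mult_beta[OF m, of u "real a / 2"]
        sum_beta_diff_eq_net_flow[of "{1..d}" m C]
      by (simp add: g_def)
  qed
  moreover have "\<forall>i j. 0 \<le> C i j \<and> C i j \<le> 3/2" using t by (simp add: C_def)
  ultimately show ?thesis unfolding flow_rep_def by blast
qed

lemma in_Vzon_if_flow_rep:
  assumes "flow_rep a d x"
  shows "x \<in> Vzon a d"
proof -
  obtain C g where C: "\<forall>i j. 0 \<le> C i j \<and> C i j \<le> 3/2"
    and g: "\<forall>m. -(real a + 2)/2 \<le> g m \<and> g m \<le> real a / 2"
    and x: "\<forall>m\<in>{1..d}. x m = net_flow {1..d} C m + g m"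
    using assms unfolding flow_rep_def by blast
  \<comment> \<open>the part of g below -a/2 is carried by the segments [-beta_k, 0]\<close>
  define t where "t = (\<lambda>i j. (2/3) * C i j)"
  define v where "v = (\<lambda>m. max 0 (-(real a / 2) - g m))"
  define u where "u = (\<lambda>m. if a = 0 then 0 else (g m + v m) / (real a / 2))"
  have gv: "-(real a / 2) \<le> g m + v m \<and> g m + v m \<le> real a / 2 \<and> 0 \<le> v m \<and> v m \<le> 1" for m
    using g[rule_format, of m] unfolding v_def by (auto simp: max_def field_simps)
  have uv: "u m * (real a / 2) - v m = g m" for m
  proof (cases "a = 0")
    case True thus ?thesis using gv[of m] unfolding u_def by simp
  next
    case False thus ?thesis unfolding u_def by (simp add: field_simps)
  qed
  have u: "-1 \<le> u m \<and> u m \<le> 1" for m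
  proof (cases "a = 0")
    case True thus ?thesis unfolding u_def by simp
  next
    case False
    hence "real a / 2 > 0" by simp
    thus ?thesis using gv[of m] unfolding u_def by (simp add: divide_le_eq le_divide_eq)
  qed
  have "\<forall>m\<in>{1..d}. x m = (\<Sum>i\<in>{1..d}. \<Sum>j\<in>{1..d}. t i j * ((3/2) * (beta i m - beta j m)))
        + (\<Sum>k\<in>{1..d}. u k * ((real a / 2) * beta k m)) + (\<Sum>k\<in>{1..d}. v k * (- beta k m))"
  proof
    fix m assume m: "m \<in> {1..d}"
    have "(\<Sum>i\<in>{1..d}. \<Sum>j\<in>{1..d}. t i j * ((3/2) * (beta i m - beta j m)))
        = (\<Sum>i\<in>{1..d}. \<Sum>j\<in>{1..d}. C i j * (beta i m - beta j m))"
      by (intro sum.cong refl) (simp add: t_def field_simps)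
    thus "x m = (\<Sum>i\<in>{1..d}. \<Sum>j\<in>{1..d}. t i j * ((3/2) * (beta i m - beta j m)))
        + (\<Sum>k\<in>{1..d}. u k * ((real a / 2) * beta k m)) + (\<Sum>k\<in>{1..d}. v k * (- beta k m))"
      using x m sum_mult_beta[OF m, of v "-1"] sum_mult_beta[OF m, of u "real a / 2"]
        sum_beta_diff_eq_net_flow[of "{1..d}" m C] uv[of m]
      by simp
  qed
  moreover have "0 \<le> t i j \<and> t i j \<le> 1" for i j using C[rule_format, of i j] by (simp add: t_def)
  ultimately show ?thesis unfolding Vzon_def using u gv by blast
qed

lemma flow_rep_sum_bounds:
  assumes "flow_rep a d x" "S \<subseteq> {1..d}"
  shows "(\<Sum>m\<in>S. x m) \<ge> -(3/2) * real (card S) * (real d - real (card S)) - (real a + 2)/2 * real (card S)"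
    and "(\<Sum>m\<in>S. x m) \<le> (3/2) * real (card S) * (real d - real (card S)) + real a / 2 * real (card S)"
proof -
  obtain C g where C: "\<forall>i j. 0 \<le> C i j \<and> C i j \<le> 3/2"
    and g: "\<forall>m. -(real a + 2)/2 \<le> g m \<and> g m \<le> real a / 2"
    and x: "\<forall>m\<in>{1..d}. x m = net_flow {1..d} C m + g m"
    using assms unfolding flow_rep_def by blast
  have fS: "finite S" using assms finite_subset by blast
  have cD: "real (card ({1..d} - S)) = real d - real (card S)"
    using assms fS card_mono[OF _ assms(2)] by (simp add: card_Diff_subset of_nat_diff)
  have "(\<Sum>m\<in>S. x m) = (\<Sum>m\<in>S. net_flow {1..d} C m) + (\<Sum>m\<in>S. g m)"
    using x assms by (simp add: sum.distrib[symmetric] subset_iff)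
  hence xs: "(\<Sum>m\<in>S. x m) = (\<Sum>m\<in>S. \<Sum>j\<in>{1..d}-S. C m j) - (\<Sum>m\<in>S. \<Sum>i\<in>{1..d}-S. C i m)
      + (\<Sum>m\<in>S. g m)"
    using sum_net_flow_subset[of "{1..d}" S C] assms by simp
  have "(\<Sum>m\<in>S. \<Sum>j\<in>{1..d}-S. C m j) \<le> (3/2) * real (card S) * (real d - real (card S))"
    "(\<Sum>m\<in>S. \<Sum>i\<in>{1..d}-S. C i m) \<le> (3/2) * real (card S) * (real d - real (card S))"
    using sum_sum_le_card[where C=C and c="3/2" and S=S and T="{1..d}-S"]
      sum_sum_le_card[where C="\<lambda>m i. C i m" and c="3/2" and S=S and T="{1..d}-S"] C cD
    by auto
  moreover have "0 \<le> (\<Sum>m\<in>S. \<Sum>j\<in>{1..d}-S. C m j)" "0 \<le> (\<Sum>m\<in>S. \<Sum>i\<in>{1..d}-S. C i m)"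
    using C by (auto intro!: sum_nonneg)
  moreover have "-(real a + 2)/2 * real (card S) \<le> (\<Sum>m\<in>S. g m)"
    "(\<Sum>m\<in>S. g m) \<le> real a / 2 * real (card S)"
    using sum_mono[of S "\<lambda>_. -(real a + 2)/2" g] sum_mono[of S g "\<lambda>_. real a / 2"] g
    by (simp_all add: mult.commute)
  ultimately show "(\<Sum>m\<in>S. x m) \<ge> -(3/2) * real (card S) * (real d - real (card S)) - (real a + 2)/2 * real (card S)"
    and "(\<Sum>m\<in>S. x m) \<le> (3/2) * real (card S) * (real d - real (card S)) + real a / 2 * real (card S)"
    using xs by linarith+
qed

lemma flow_rep_signed:
  assumes bounds: "\<forall>i j. -(3/2) \<le> D i j \<and> D i j \<le> 3/2" and lower: "\<forall>i j. D i j \<noteq> 0 \<longrightarrow> j < i"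
    and g: "\<forall>m. -(real a + 2)/2 \<le> g m \<and> g m \<le> real a / 2"
    and x: "\<forall>m\<in>{1..d}. x m = net_flow {1..d} D m + g m"
  shows "flow_rep a d x"
proof -
  \<comment> \<open>a negative flow from i to j is a positive flow from j to i\<close>
  define C where "C = (\<lambda>i j. max (D i j) 0 + max (- D j i) 0)"
  have "0 \<le> C i j \<and> C i j \<le> 3/2" for i j
  proof -
    have "-(3/2) \<le> D j i" "D j i \<le> 3/2" "-(3/2) \<le> D i j" "D i j \<le> 3/2" using bounds by auto
    moreover have "D j i = 0 \<or> D i j = 0" using lower by (metis less_asym)
    ultimately show ?thesis unfolding C_def by (auto simp: max_def)
  qed
  moreover have "net_flow {1..d} C m = net_flow {1..d} D m" for m
  proof -
    have split: "max z 0 - max (-z) 0 = z" for z :: real by (auto simp: max_def)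
    have "net_flow {1..d} C m = ((\<Sum>j\<in>{1..d}. max (D m j) 0) - (\<Sum>j\<in>{1..d}. max (- D m j) 0))
        - ((\<Sum>i\<in>{1..d}. max (D i m) 0) - (\<Sum>i\<in>{1..d}. max (- D i m) 0))"
      unfolding net_flow_def C_def by (simp add: sum.distrib algebra_simps)
    also have "\<dots> = net_flow {1..d} D m"
      by (simp add: net_flow_def sum_subtractf[symmetric] split)
    finally show ?thesis .
  qed
  ultimately show ?thesis unfolding flow_rep_def using g x by metis
qed

lemma flow_rep_permute:
  assumes "flow_rep a d x" "bij_betw w {1..d} {1..d}" "\<forall>m\<in>{1..d}. x' m = x (w m)"
  shows "flow_rep a d x'"
proof -
  obtain C g where C: "\<forall>i j. 0 \<le> C i j \<and> C i j \<le> 3/2"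
    and g: "\<forall>m. -(real a + 2)/2 \<le> g m \<and> g m \<le> real a / 2"
    and x: "\<forall>m\<in>{1..d}. x m = net_flow {1..d} C m + g m"
    using assms unfolding flow_rep_def by blast
  have "net_flow {1..d} (\<lambda>i j. C (w i) (w j)) m = net_flow {1..d} C (w m)" for m
    using sum.reindex_bij_betw[OF assms(2), of "\<lambda>j. C (w m) j"]
      sum.reindex_bij_betw[OF assms(2), of "\<lambda>i. C i (w m)"]
    by (simp add: net_flow_def)
  moreover have "w m \<in> {1..d}" if "m \<in> {1..d}" for m
    using assms(2) that bij_betwE by blast
  ultimately have "\<forall>m\<in>{1..d}. x' m = net_flow {1..d} (\<lambda>i j. C (w i) (w j)) m + g (w m)"
    using x assms(3) by simp
  thus ?thesis unfolding flow_rep_def using C g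
    by (intro exI[of _ "\<lambda>i j. C (w i) (w j)"] exI[of _ "\<lambda>m. g (w m)"]) simp
qed

section \<open>Monotone sequences as net flows\<close>

lemma convex_bound_between:
  fixes A :: "nat \<Rightarrow> real" and k c m q :: nat and lam :: real
  assumes "c \<le> m" "m \<le> q"
    and "A c \<ge> -(3/2) * real c * (real k - real c)"
    and "A q \<ge> -(3/2) * real q * (real k - real q)"
    and "A m = A c + (real m - real c) * lam"
    and "A q = A c + (real q - real c) * lam"
  shows "A m \<ge> -(3/2) * real m * (real k - real m)"
proof (cases "c = q")
  case True then show ?thesis using assms by (metis le_antisym)
next
  case False
  hence cq: "real c < real q" using assms by simp
  have id: "(real q - real c) * A m = (real q - real m) * A c + (real m - real c) * A q"
    unfolding assms(5) assms(6) by (simp add: algebra_simps)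
  have cv: "(real q - real m) * (-(3/2) * real c * (real k - real c)) + (real m - real c) * (-(3/2) * real q * (real k - real q))
      - (real q - real c) * (-(3/2) * real m * (real k - real m)) = (3/2) * (real q - real m) * (real m - real c) * (real q - real c)"
    by (simp add: field_simps)
  have p1: "(real q - real m) * A c \<ge> (real q - real m) * (-(3/2) * real c * (real k - real c))"
    using assms by (intro mult_left_mono) auto
  have p2: "(real m - real c) * A q \<ge> (real m - real c) * (-(3/2) * real q * (real k - real q))"
    using assms by (intro mult_left_mono) auto
  have p3: "(3/2) * (real q - real m) * (real m - real c) * (real q - real c) \<ge> 0"
    using assms by simp
  have "(real q - real c) * A m \<ge> (real q - real c) * (-(3/2) * real m * (real k - real m))"
    using id cv p1 p2 p3 by linarith
  moreover have "real q - real c > 0" using cq by simp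
  ultimately show ?thesis by (rule mult_left_le_imp_le)
qed

lemma sum_greaterThanAtMost_split:
  fixes f :: "nat \<Rightarrow> real"
  assumes "m \<le> k"
  shows "(\<Sum>i\<in>{b<..b+k}. f i) = (\<Sum>i\<in>{b<..b+m}. f i) + (\<Sum>i\<in>{b+m<..b+k}. f i)"
proof -
  have "{b<..b+k} = {b<..b+m} \<union> {b+m<..b+k}" using assms by auto
  moreover have "{b<..b+m} \<inter> {b+m<..b+k} = {}" by auto
  ultimately show ?thesis by (simp add: sum.union_disjoint)
qed

lemma sum_greaterThanAtMost_Suc:
  fixes f :: "nat \<Rightarrow> real"
  shows "(\<Sum>i\<in>{b<..b+Suc m}. f i) = (\<Sum>i\<in>{b<..b+m}. f i) + f (Suc (b+m))"
proof -
  have "{b<..b+Suc m} = insert (Suc (b+m)) {b<..b+m}" by auto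
  thus ?thesis by simp
qed

lemma linear_on_constant_steps:
  fixes A val :: "nat \<Rightarrow> real"
  assumes step: "\<And>n. A (Suc n) = A n + val (Suc n)" and const: "\<And>j. c < j \<Longrightarrow> j \<le> q \<Longrightarrow> val j = lam"
    and "c \<le> n" "n \<le> q"
  shows "A n = A c + (real n - real c) * lam"
  using assms(3,4)
proof (induction n)
  case (Suc n)
  show ?case
  proof (cases "c = Suc n")
    case False
    hence "c \<le> n" using Suc.prems by simp
    thus ?thesis using Suc step const[of "Suc n"] by (simp add: algebra_simps)
  qed simp
qed simp

text \<open>The bound is convex in m; on a stretch where A grows linearly it therefore holds as soon
  as it holds at both ends.\<close>

lemma prefix_bound_piecewise:
  fixes A val :: "nat \<Rightarrow> real" and k :: nat and Lw Up :: "nat \<Rightarrow> bool" and lam :: real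
  assumes Astep: "\<And>m. A (Suc m) = A m + val (Suc m)"
    and lw: "\<And>m. m \<le> k \<Longrightarrow> Lw m \<Longrightarrow> A m \<ge> -(3/2) * real m * (real k - real m)"
    and up: "\<And>m. m \<le> k \<Longrightarrow> Up m \<Longrightarrow> A m \<ge> -(3/2) * real m * (real k - real m)"
    and Lw0: "Lw 0" and Upk: "Up k"
    and mid: "\<And>j. 1 \<le> j \<Longrightarrow> j \<le> k \<Longrightarrow> \<not> Lw j \<Longrightarrow> \<not> Up (j-1) \<Longrightarrow> val j = lam"
    and lwdown: "\<And>i j. i \<le> j \<Longrightarrow> j \<le> k \<Longrightarrow> Lw j \<Longrightarrow> Lw i"
    and upup: "\<And>i j. i \<le> j \<Longrightarrow> j \<le> k \<Longrightarrow> Up i \<Longrightarrow> Up j"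
    and mk: "m \<le> k"
  shows "A m \<ge> -(3/2) * real m * (real k - real m)"
proof (cases "Lw m \<or> Up m")
  case True thus ?thesis using lw up mk by blast
next
  case False
  hence nL: "\<not> Lw m" and nU: "\<not> Up m" by auto
  define CS where "CS = {c. c \<le> m \<and> Lw c}"
  define QS where "QS = {q. m \<le> q \<and> q \<le> k \<and> Up q}"
  have fCS: "finite CS" "CS \<noteq> {}" unfolding CS_def using Lw0 by auto
  have fQS: "finite QS" "QS \<noteq> {}" unfolding QS_def using Upk mk by auto
  define c where "c = Max CS"
  define q where "q = Min QS"
  have cin: "c \<in> CS" unfolding c_def using fCS by simp
  have qin: "q \<in> QS" unfolding q_def using fQS by simp
  have cm: "c \<le> m" and Lc: "Lw c" using cin CS_def by auto
  have mq: "m \<le> q" and qk: "q \<le> k" and Uq: "Up q" using qin QS_def by auto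
  have cmax: "\<And>j. j \<le> m \<Longrightarrow> Lw j \<Longrightarrow> j \<le> c" unfolding c_def using fCS CS_def by auto
  have qmin: "\<And>j. m \<le> j \<Longrightarrow> j \<le> k \<Longrightarrow> Up j \<Longrightarrow> q \<le> j" unfolding q_def using fQS QS_def by auto
  have valj: "val j = lam" if "c < j" "j \<le> q" for j
  proof -
    have "\<not> Lw j"
    proof
      assume "Lw j"
      show False
      proof (cases "j \<le> m")
        case True thus False using cmax[OF True \<open>Lw j\<close>] that by simp
      next
        case False thus False using lwdown[of m j] \<open>Lw j\<close> nL that qk by simp
      qed
    qed
    moreover have "\<not> Up (j-1)"
    proof
      assume U: "Up (j-1)"
      show False
      proof (cases "m \<le> j - 1")
        case True
        have "j - 1 \<le> k" using that qk by simp
        from qmin[OF True this U] that show False by linarith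
      next
        case False thus False using upup[of "j-1" m] U nU mk by simp
      qed
    qed
    ultimately show ?thesis using mid[of j] that qk by simp
  qed
  have linear: "A n = A c + (real n - real c) * lam" if "c \<le> n" "n \<le> q" for n
    using Astep valj that by (rule linear_on_constant_steps)
  have Amq: "A m = A c + (real m - real c) * lam" "A q = A c + (real q - real c) * lam"
    using linear[OF cm mq] linear[of q] cm mq by simp_all
  show ?thesis
    by (rule convex_bound_between[OF cm mq lw[OF _ Lc] up[OF qk Uq] Amq]) (use cm mk in simp)
qed

lemma prefix_bound_thresholds:
  fixes A val f :: "nat \<Rightarrow> real" and \<alpha> \<beta> lam :: real
  assumes mono: "\<And>i j. b < i \<Longrightarrow> i \<le> j \<Longrightarrow> j \<le> b + k \<Longrightarrow> f i \<le> f j"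
    and step: "\<And>n. A (Suc n) = A n + val (Suc n)"
    and mid: "\<And>j. 1 \<le> j \<Longrightarrow> j \<le> k \<Longrightarrow> \<alpha> < f (b+j) \<Longrightarrow> f (b+j) < \<beta> \<Longrightarrow> val j = lam"
    and A0: "A 0 = 0" and Ak: "A k = 0"
    and low: "\<And>m. 1 \<le> m \<Longrightarrow> m \<le> k \<Longrightarrow> f (b+m) \<le> \<alpha> \<Longrightarrow> A m \<ge> -(3/2) * real m * (real k - real m)"
    and high: "\<And>m. m < k \<Longrightarrow> \<beta> \<le> f (b+m+1) \<Longrightarrow> A m \<ge> -(3/2) * real m * (real k - real m)"
    and mk: "m \<le> k"
  shows "A m \<ge> -(3/2) * real m * (real k - real m)"
proof (rule prefix_bound_piecewise[where Lw = "\<lambda>m. m = 0 \<or> f (b+m) \<le> \<alpha>" and Up = "\<lambda>m. m = k \<or> \<beta> \<le> f (b+m+1)"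
      and val = val and lam = lam])
  show "(\<lambda>m. m = 0 \<or> f (b+m) \<le> \<alpha>) i" if "i \<le> j" "j \<le> k" "j = 0 \<or> f (b+j) \<le> \<alpha>" for i j
    using that mono[of "b+i" "b+j"] by (cases "i = 0") auto
  show "(\<lambda>m. m = k \<or> \<beta> \<le> f (b+m+1)) j" if "i \<le> j" "j \<le> k" "i = k \<or> \<beta> \<le> f (b+i+1)" for i j
    using that mono[of "b+i+1" "b+j+1"] by (cases "j = k") auto
  show "A m \<ge> -(3/2) * real m * (real k - real m)" if "m \<le> k" "m = 0 \<or> f (b+m) \<le> \<alpha>" for m
    using that A0 low[of m] by (cases "m = 0") auto
  show "A m \<ge> -(3/2) * real m * (real k - real m)" if "m \<le> k" "m = k \<or> \<beta> \<le> f (b+m+1)" for m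
    using that Ak high[of m] by (cases "m = k") auto
qed (use step mid mk in auto)

lemma ex_water_level:
  fixes f :: "nat \<Rightarrow> real"
  assumes mono: "\<And>i j. b < i \<Longrightarrow> i \<le> j \<Longrightarrow> j \<le> b + k \<Longrightarrow> f i \<le> f j"
    and k: "1 \<le> k" and T: "0 \<le> T" "T \<le> (3/2) * real k"
  obtains lam where "(\<Sum>j\<in>{b<..b+k}. min (f j + 3/2) (max (f j) lam) - f j) = T"
proof -
  define g where "g = (\<lambda>lam. \<Sum>j\<in>{b<..b+k}. min (f j + 3/2) (max (f j) lam) - f j)"
  have "continuous_on {f (b+1) .. f (b+k) + 3/2} g"
    unfolding g_def by (intro continuous_intros)
  moreover have "g (f (b+1)) = 0"
    unfolding g_def using mono[of "b+1"] by (intro sum.neutral) auto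
  moreover have "g (f (b+k) + 3/2) = (3/2) * real k"
  proof -
    have "g (f (b+k) + 3/2) = (\<Sum>j\<in>{b<..b+k}. 3/2)"
      unfolding g_def
    proof (rule sum.cong[OF refl])
      fix j assume "j \<in> {b<..b+k}"
      hence "f j \<le> f (b+k)" using mono[of j "b+k"] by simp
      thus "min (f j + 3/2) (max (f j) (f (b+k) + 3/2)) - f j = 3/2" by simp
    qed
    thus ?thesis by simp
  qed
  moreover have "f (b+1) \<le> f (b+k) + 3/2" using mono[of "b+1" "b+k"] k by simp
  ultimately obtain lam where "g lam = T"
    using IVT'[of g "f (b+1)" T "f (b+k) + 3/2"] T by auto
  thus ?thesis using that unfolding g_def by blast
qed

lemma prefix_bound_add_top:
  fixes P R T :: real
  assumes mk: "m \<le> k" and P: "P \<ge> -(3/2) * real m * (real k + 1 - real m)"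
    and total: "P + R + T = 0" and R: "R \<le> real (k - m) * T"
  shows "P + T \<ge> -(3/2) * real m * (real k - real m)"
proof -
  have "(real k + 1 - real m) * (P + T) \<ge> (real k - real m) * P"
    using total R mk by (simp add: of_nat_diff algebra_simps)
  moreover have "(real k - real m) * P \<ge> (real k - real m) * (-(3/2) * real m * (real k + 1 - real m))"
    using P mk by (intro mult_left_mono) auto
  ultimately have "(real k + 1 - real m) * (P + T) \<ge> (real k + 1 - real m) * (-(3/2) * real m * (real k - real m))"
    by (simp add: algebra_simps)
  moreover have "real k + 1 - real m > 0" using mk by simp
  ultimately show ?thesis by (rule mult_left_le_imp_le)
qed

lemma raise_prefix_bound:
  fixes f :: "nat \<Rightarrow> real"
  assumes mono: "\<And>i j. b < i \<Longrightarrow> i \<le> j \<Longrightarrow> j \<le> b + Suc k \<Longrightarrow> f i \<le> f j"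
    and pre: "\<And>m. m \<le> Suc k \<Longrightarrow> (\<Sum>i\<in>{b<..b+m}. f i) \<ge> -(3/2) * real m * (real (Suc k) - real m)"
    and sumk: "(\<Sum>i\<in>{b<..b+k}. f i) = - f (b + Suc k)"
    and sum_raised: "(\<Sum>i\<in>{b<..b+k}. min (f i + 3/2) (max (f i) lam)) = 0"
    and mk: "m \<le> k"
  shows "(\<Sum>i\<in>{b<..b+m}. min (f i + 3/2) (max (f i) lam)) \<ge> -(3/2) * real m * (real k - real m)"
proof -
  define T where "T = f (b + Suc k)"
  define f' where "f' = (\<lambda>j. min (f j + 3/2) (max (f j) lam))"
  define A where "A = (\<lambda>m. \<Sum>i\<in>{b<..b+m}. f' i)"
  have "A m \<ge> -(3/2) * real m * (real k - real m)"
  proof (rule prefix_bound_thresholds[where f = f and b = b and val = "\<lambda>j. f' (b+j)"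
        and \<alpha> = "lam - 3/2" and \<beta> = lam and lam = lam])
    show "\<And>i j. b < i \<Longrightarrow> i \<le> j \<Longrightarrow> j \<le> b + k \<Longrightarrow> f i \<le> f j" using mono by simp
    show "\<And>n. A (Suc n) = A n + f' (b + Suc n)"
      unfolding A_def using sum_greaterThanAtMost_Suc by simp
    show "A 0 = 0" "A k = 0" using sum_raised by (simp_all add: A_def f'_def)
    show "m \<le> k" by fact
    show "f' (b+j) = lam" if "lam - 3/2 < f (b+j)" "f (b+j) < lam" for j
      using that unfolding f'_def by auto
    show "A m \<ge> -(3/2) * real m * (real k - real m)" if mk: "1 \<le> m" "m \<le> k" and cap: "f (b+m) \<le> lam - 3/2" for m
    proof -
      have "A m = (\<Sum>i\<in>{b<..b+m}. f i + 3/2)"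
        unfolding A_def
      proof (rule sum.cong[OF refl])
        fix i assume "i \<in> {b<..b+m}"
        hence "f i \<le> f (b+m)" using mono[of i "b+m"] mk by simp
        thus "f' i = f i + 3/2" unfolding f'_def using cap by simp
      qed
      hence "A m = (\<Sum>i\<in>{b<..b+m}. f i) + (3/2) * real m" by (simp add: sum.distrib)
      moreover have "-(3/2)*real m*(real (Suc k) - real m) \<le> (\<Sum>i\<in>{b<..b+m}. f i)"
        using pre[of m] mk by simp
      moreover have "-(3/2)*real m*(real k - real m) = -(3/2)*real m*(real (Suc k) - real m) + 3/2*real m"
        by (simp add: field_simps)
      ultimately show ?thesis by linarith
    qed
    show "A m \<ge> -(3/2) * real m * (real k - real m)" if mk: "m < k" and nr: "lam \<le> f (b+m+1)" for m
    proof -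
      \<comment> \<open>the entries beyond the water level are unchanged, and each is at most T\<close>
      have mk': "m \<le> k" using mk by simp
      have rest: "(\<Sum>i\<in>{b+m<..b+k}. f' i) = (\<Sum>i\<in>{b+m<..b+k}. f i)"
      proof (rule sum.cong[OF refl])
        fix i assume "i \<in> {b+m<..b+k}"
        hence "f (b+m+1) \<le> f i" using mono[of "b+m+1" i] by simp
        thus "f' i = f i" unfolding f'_def using nr by simp
      qed
      have Am: "A m = - (\<Sum>i\<in>{b+m<..b+k}. f i)"
        using sum_greaterThanAtMost_split[OF mk', of f' b] sum_raised rest unfolding A_def f'_def by simp
      define P where "P = (\<Sum>i\<in>{b<..b+m}. f i)"
      have Pm: "P \<ge> -(3/2) * real m * (real k + 1 - real m)"
        using pre[of m] mk unfolding P_def by (simp add: add_ac)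
      have tot: "P + (\<Sum>i\<in>{b+m<..b+k}. f i) + T = 0"
        using sum_greaterThanAtMost_split[OF mk', of f b] sumk unfolding P_def T_def by simp
      have "(\<Sum>i\<in>{b+m<..b+k}. f i) \<le> (\<Sum>i\<in>{b+m<..b+k}. T)"
        unfolding T_def using mono by (intro sum_mono) auto
      hence "(\<Sum>i\<in>{b+m<..b+k}. f i) \<le> real (k - m) * T" by simp
      from prefix_bound_add_top[OF mk' Pm tot this]
      show ?thesis using Am tot by simp
    qed
  qed
  thus ?thesis unfolding A_def f'_def .
qed

lemma net_flow_extend_top:
  fixes f f' :: "nat \<Rightarrow> real"
  assumes supp: "\<And>i j. C' i j \<noteq> 0 \<Longrightarrow> b < j \<and> j < i \<and> i \<le> b + k"
    and f': "\<forall>i\<in>{b<..b+k}. f' i = net_flow {b<..b+k} C' i"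
    and top: "f (b + Suc k) = (\<Sum>j\<in>{b<..b+k}. f' j - f j)"
    and C: "C = (\<lambda>i j. C' i j + (if i = b + Suc k \<and> b < j \<and> j \<le> b + k then f' j - f j else 0))"
  shows "\<forall>i\<in>{b<..b+Suc k}. f i = net_flow {b<..b+Suc k} C i"
proof
  fix i assume iI: "i \<in> {b<..b + Suc k}"
  have D: "{b<..b + Suc k} = insert (b + Suc k) {b<..b+k}" by auto
  have C'_top: "C' (b + Suc k) j = 0" "C' j (b + Suc k) = 0" for j
    using supp by fastforce+
  show "f i = net_flow {b<..b + Suc k} C i"
  proof (cases "i = b + Suc k")
    case True
    have "(\<Sum>j\<in>{b<..b + Suc k}. C i j) = (\<Sum>j\<in>{b<..b+k}. f' j - f j)"
      unfolding D C using True C'_top by simp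
    moreover have "(\<Sum>j\<in>{b<..b + Suc k}. C j i) = 0"
      unfolding D C using True C'_top by simp
    ultimately show ?thesis using top True by (simp add: net_flow_def)
  next
    case False
    hence ik: "i \<in> {b<..b+k}" using iI by auto
    have "(\<Sum>j\<in>{b<..b + Suc k}. C i j) = (\<Sum>j\<in>{b<..b+k}. C' i j)"
      unfolding D C using False C'_top by simp
    moreover have "(\<Sum>j\<in>{b<..b + Suc k}. C j i) = (\<Sum>j\<in>{b<..b+k}. C' j i) + (f' i - f i)"
    proof -
      have "(\<Sum>j\<in>{b<..b+k}. C j i) = (\<Sum>j\<in>{b<..b+k}. C' j i)"
        unfolding C by (rule sum.cong) auto
      moreover have "C (b + Suc k) i = f' i - f i" using C'_top ik unfolding C by simp
      ultimately show ?thesis unfolding D by simp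
    qed
    ultimately show ?thesis using f' ik by (simp add: net_flow_def)
  qed
qed

text \<open>Induction on k: the last entry is sent to the earlier ones, each of which is raised towards a
  common water level by at most 3/2.\<close>

lemma monotone_zero_sum_net_flow:
  fixes f :: "nat \<Rightarrow> real" and b k :: nat
  assumes "\<And>i j. b < i \<Longrightarrow> i \<le> j \<Longrightarrow> j \<le> b + k \<Longrightarrow> f i \<le> f j"
    and "(\<Sum>i\<in>{b<..b+k}. f i) = 0"
    and "\<And>m. m \<le> k \<Longrightarrow> (\<Sum>i\<in>{b<..b+m}. f i) \<ge> -(3/2) * real m * (real k - real m)"
  shows "\<exists>C. (\<forall>i j. 0 \<le> C i j \<and> C i j \<le> 3/2) \<and> (\<forall>i j. C i j \<noteq> 0 \<longrightarrow> b < j \<and> j < i \<and> i \<le> b + k)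
      \<and> (\<forall>i\<in>{b<..b+k}. f i = net_flow {b<..b+k} C i)"
  using assms
proof (induction k arbitrary: f)
  case 0
  show ?case by (rule exI[of _ "\<lambda>_ _. 0"]) auto
next
  case (Suc k)
  note mono = Suc.prems(1) and zero = Suc.prems(2) and pre = Suc.prems(3)
  define T where "T = f (b + Suc k)"
  have sumk: "(\<Sum>i\<in>{b<..b+k}. f i) = - T"
    using zero sum_greaterThanAtMost_Suc[of f b k] unfolding T_def by simp
  show ?case
  proof (cases "k = 0")
    case True
    hence "f (b+1) = 0" and "{b<..b + Suc k} = {b+1}" using sumk T_def by auto
    thus ?thesis by (intro exI[of _ "\<lambda>_ _. 0"]) (auto simp: net_flow_def)
  next
    case False
    have "(\<Sum>i\<in>{b<..b+Suc k}. f i) \<le> (\<Sum>i\<in>{b<..b+Suc k}. T)"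
      unfolding T_def using mono by (intro sum_mono) auto
    hence "T \<ge> 0" using zero by (simp add: zero_le_mult_iff)
    moreover have "T \<le> (3/2) * real k" using pre[of k] sumk by simp
    ultimately obtain lam where lam: "(\<Sum>j\<in>{b<..b+k}. min (f j + 3/2) (max (f j) lam) - f j) = T"
      using ex_water_level[of b k f T] mono False by auto
    define f' where "f' = (\<lambda>j. min (f j + 3/2) (max (f j) lam))"
    have "f' i \<le> f' j" if "b < i" "i \<le> j" "j \<le> b + k" for i j
      using mono[of i j] that unfolding f'_def by (auto simp: min_def max_def)
    moreover have sum_f': "(\<Sum>j\<in>{b<..b+k}. f' j) = 0"
      using lam sumk by (simp add: f'_def sum_subtractf)
    moreover have "(\<Sum>i\<in>{b<..b+m}. f' i) \<ge> -(3/2) * real m * (real k - real m)" if "m \<le> k" for m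
      unfolding f'_def using raise_prefix_bound[OF mono pre] sumk sum_f' that
      unfolding T_def f'_def by blast
    ultimately obtain C' where C': "\<forall>i j. 0 \<le> C' i j \<and> C' i j \<le> 3/2"
        "\<forall>i j. C' i j \<noteq> 0 \<longrightarrow> b < j \<and> j < i \<and> i \<le> b + k"
        "\<forall>i\<in>{b<..b+k}. f' i = net_flow {b<..b+k} C' i"
      using Suc.IH[of f'] by blast
    define C where "C = (\<lambda>i j. C' i j + (if i = b + Suc k \<and> b < j \<and> j \<le> b + k then f' j - f j else 0))"
    have "f (b + Suc k) = (\<Sum>j\<in>{b<..b+k}. f' j - f j)"
      using lam unfolding T_def f'_def by simp
    hence "\<forall>i\<in>{b<..b+Suc k}. f i = net_flow {b<..b+Suc k} C i"
      using net_flow_extend_top[of C' b k f' f C] C' C_def by blast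
    moreover have "0 \<le> C i j \<and> C i j \<le> 3/2" for i j
    proof (cases "i = b + Suc k \<and> b < j \<and> j \<le> b + k")
      case True
      hence "C' i j = 0" using C'(2) by fastforce
      moreover have "f j \<le> f' j" "f' j \<le> f j + 3/2" unfolding f'_def by auto
      ultimately show ?thesis using True unfolding C_def by simp
    next
      case False
      hence "C i j = C' i j" unfolding C_def by (simp only: if_False if_not_P add_0_right)
      thus ?thesis using C'(1) by simp
    qed
    moreover have "b < j \<and> j < i \<and> i \<le> b + Suc k" if "C i j \<noteq> 0" for i j
      using that C'(2) unfolding C_def by (fastforce split: if_splits)
    ultimately show ?thesis by blast
  qed
qed

lemma ex_clamp_level:
  fixes y :: "nat \<Rightarrow> real"
  assumes mono: "\<And>i j. b < i \<Longrightarrow> i \<le> j \<Longrightarrow> j \<le> b + k \<Longrightarrow> y i \<le> y j"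
    and k: "1 \<le> k" and LU: "L \<le> U"
    and Y: "L * real k \<le> (\<Sum>i\<in>{b<..b+k}. y i)" "(\<Sum>i\<in>{b<..b+k}. y i) \<le> U * real k"
  obtains mu where "(\<Sum>i\<in>{b<..b+k}. y i - max L (min U (y i - mu))) = 0"
proof -
  define h where "h = (\<lambda>mu. \<Sum>i\<in>{b<..b+k}. y i - max L (min U (y i - mu)))"
  define mu1 where "mu1 = y (b+1) - U"
  define mu2 where "mu2 = y (b+k) - L"
  have "mu1 \<le> mu2" using mono[of "b+1" "b+k"] k LU unfolding mu1_def mu2_def by simp
  moreover have "continuous_on {mu1..mu2} h" unfolding h_def by (intro continuous_intros)
  moreover have "h mu1 = (\<Sum>i\<in>{b<..b+k}. y i - U)"
    unfolding h_def
  proof (rule sum.cong[OF refl])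
    fix i assume "i \<in> {b<..b+k}"
    hence "y (b+1) \<le> y i" using mono[of "b+1" i] by simp
    thus "y i - max L (min U (y i - mu1)) = y i - U" using LU unfolding mu1_def by simp
  qed
  moreover have "h mu2 = (\<Sum>i\<in>{b<..b+k}. y i - L)"
    unfolding h_def
  proof (rule sum.cong[OF refl])
    fix i assume "i \<in> {b<..b+k}"
    hence "y i \<le> y (b+k)" using mono[of i "b+k"] by simp
    thus "y i - max L (min U (y i - mu2)) = y i - L" using LU unfolding mu2_def by simp
  qed
  ultimately obtain mu where "h mu = 0"
    using IVT'[of h mu1 0 mu2] Y by (auto simp: sum_subtractf mult.commute)
  thus ?thesis using that unfolding h_def by blast
qed

lemma clamp_prefix_bound:
  fixes y :: "nat \<Rightarrow> real"
  assumes mono: "\<And>i j. b < i \<Longrightarrow> i \<le> j \<Longrightarrow> j \<le> b + k \<Longrightarrow> y i \<le> y j"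
    and LU: "L \<le> U"
    and lo: "\<And>m. 1 \<le> m \<Longrightarrow> m \<le> k \<Longrightarrow> (\<Sum>i\<in>{b<..b+m}. y i) \<ge> -(3/2) * real m * (real k - real m) + L * real m"
    and up: "\<And>m. m < k \<Longrightarrow> (\<Sum>i\<in>{b+m<..b+k}. y i) \<le> (3/2) * real m * (real k - real m) + U * (real k - real m)"
    and zero: "(\<Sum>i\<in>{b<..b+k}. y i - max L (min U (y i - mu))) = 0"
    and mk: "m \<le> k"
  shows "(\<Sum>i\<in>{b<..b+m}. y i - max L (min U (y i - mu))) \<ge> -(3/2) * real m * (real k - real m)"
proof -
  define f where "f = (\<lambda>i. y i - max L (min U (y i - mu)))"
  define A where "A = (\<lambda>m. \<Sum>i\<in>{b<..b+m}. f i)"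
  have "A m \<ge> -(3/2) * real m * (real k - real m)"
  proof (rule prefix_bound_thresholds[where f = y and b = b and val = "\<lambda>j. f (b+j)"
        and \<alpha> = "L + mu" and \<beta> = "U + mu" and lam = mu])
    show "\<And>i j. b < i \<Longrightarrow> i \<le> j \<Longrightarrow> j \<le> b + k \<Longrightarrow> y i \<le> y j" by (rule mono)
    show "\<And>n. A (Suc n) = A n + f (b + Suc n)"
      unfolding A_def using sum_greaterThanAtMost_Suc by simp
    show "A 0 = 0" "A k = 0" using zero by (simp_all add: A_def f_def)
    show "m \<le> k" by fact
    show "f (b+j) = mu" if "L + mu < y (b+j)" "y (b+j) < U + mu" for j
      using that unfolding f_def by auto
    show "A m \<ge> -(3/2) * real m * (real k - real m)" if mk: "1 \<le> m" "m \<le> k" and cap: "y (b+m) \<le> L + mu" for m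
    proof -
      have "A m = (\<Sum>i\<in>{b<..b+m}. y i - L)"
        unfolding A_def
      proof (rule sum.cong[OF refl])
        fix i assume "i \<in> {b<..b+m}"
        hence "y i \<le> y (b+m)" using mono[of i "b+m"] mk by simp
        thus "f i = y i - L" unfolding f_def using cap LU by simp
      qed
      also have "\<dots> = (\<Sum>i\<in>{b<..b+m}. y i) - L * real m" by (simp add: sum_subtractf)
      finally show ?thesis using lo[of m] mk by simp
    qed
    show "A m \<ge> -(3/2) * real m * (real k - real m)" if mk: "m < k" and nr: "U + mu \<le> y (b+m+1)" for m
    proof -
      have "(\<Sum>i\<in>{b+m<..b+k}. f i) = (\<Sum>i\<in>{b+m<..b+k}. y i - U)"
      proof (rule sum.cong[OF refl])
        fix i assume "i \<in> {b+m<..b+k}"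
        hence "y (b+m+1) \<le> y i" using mono[of "b+m+1" i] by simp
        thus "f i = y i - U" unfolding f_def using nr LU by simp
      qed
      hence "(\<Sum>i\<in>{b+m<..b+k}. f i) = (\<Sum>i\<in>{b+m<..b+k}. y i) - U * (real k - real m)"
        using mk by (simp add: sum_subtractf of_nat_diff)
      moreover have "A m = - (\<Sum>i\<in>{b+m<..b+k}. f i)"
        using sum_greaterThanAtMost_split[of m k f b] mk zero unfolding A_def f_def by simp
      ultimately show ?thesis using up[OF mk] by simp
    qed
  qed
  thus ?thesis unfolding A_def f_def .
qed

text \<open>The box part of the decomposition is y clamped to [L, U] after a shift mu chosen so that
  the remainder has total 0.\<close>

lemma monotone_net_flow_box:
  fixes y :: "nat \<Rightarrow> real" and b k :: nat and L U :: real
  assumes mono: "\<And>i j. b < i \<Longrightarrow> i \<le> j \<Longrightarrow> j \<le> b + k \<Longrightarrow> y i \<le> y j"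
    and lo: "\<And>m. 1 \<le> m \<Longrightarrow> m \<le> k \<Longrightarrow> (\<Sum>i\<in>{b<..b+m}. y i) \<ge> -(3/2) * real m * (real k - real m) + L * real m"
    and up: "\<And>m. m < k \<Longrightarrow> (\<Sum>i\<in>{b+m<..b+k}. y i) \<le> (3/2) * real m * (real k - real m) + U * (real k - real m)"
  shows "\<exists>C cc. (\<forall>i j. 0 \<le> C i j \<and> C i j \<le> 3/2) \<and> (\<forall>i j. C i j \<noteq> 0 \<longrightarrow> b < j \<and> j < i \<and> i \<le> b + k)
      \<and> (\<forall>i\<in>{b<..b+k}. L \<le> cc i \<and> cc i \<le> U)
      \<and> (\<forall>i\<in>{b<..b+k}. y i = net_flow {b<..b+k} C i + cc i)"
proof (cases "k = 0")
  case True
  thus ?thesis by (intro exI[of _ "\<lambda>_ _. 0"] exI[of _ "\<lambda>_. L"]) auto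
next
  case False
  have Yl: "L * real k \<le> (\<Sum>i\<in>{b<..b+k}. y i)" using lo[of k] False by simp
  moreover have Yu: "(\<Sum>i\<in>{b<..b+k}. y i) \<le> U * real k" using up[of 0] False by simp
  ultimately have "L * real k \<le> U * real k" by linarith
  hence LU: "L \<le> U" using False by simp
  obtain mu where zero: "(\<Sum>i\<in>{b<..b+k}. y i - max L (min U (y i - mu))) = 0"
    using ex_clamp_level[OF mono _ LU Yl Yu] False by auto
  define f where "f = (\<lambda>i. y i - max L (min U (y i - mu)))"
  have "f i \<le> f j" if "b < i" "i \<le> j" "j \<le> b + k" for i j
    using mono[OF that] LU unfolding f_def by (auto simp: min_def max_def)
  moreover have "(\<Sum>i\<in>{b<..b+m}. f i) \<ge> -(3/2) * real m * (real k - real m)" if "m \<le> k" for m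
    using clamp_prefix_bound[OF mono LU lo up zero that] unfolding f_def .
  ultimately obtain C where C: "\<forall>i j. 0 \<le> C i j \<and> C i j \<le> 3/2"
      "\<forall>i j. C i j \<noteq> 0 \<longrightarrow> b < j \<and> j < i \<and> i \<le> b + k"
      "\<forall>i\<in>{b<..b+k}. f i = net_flow {b<..b+k} C i"
    using monotone_zero_sum_net_flow[of b k f] zero unfolding f_def by blast
  show ?thesis
    by (intro exI[of _ C] exI[of _ "\<lambda>i. max L (min U (y i - mu))"])
      (use C LU in \<open>auto simp: f_def\<close>)
qed

lemma monotone_net_flow_box_strict:
  fixes y :: "nat \<Rightarrow> real" and b k :: nat and L U :: real
  assumes mono: "\<And>i j. b < i \<Longrightarrow> i \<le> j \<Longrightarrow> j \<le> b + k \<Longrightarrow> y i \<le> y j"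
    and lo: "\<And>m. 1 \<le> m \<Longrightarrow> m \<le> k \<Longrightarrow> (\<Sum>i\<in>{b<..b+m}. y i) > -(3/2) * real m * (real k - real m) + L * real m"
    and up: "\<And>m. m < k \<Longrightarrow> (\<Sum>i\<in>{b+m<..b+k}. y i) \<le> (3/2) * real m * (real k - real m) + U * (real k - real m)"
  shows "\<exists>C cc. (\<forall>i j. 0 \<le> C i j \<and> C i j \<le> 3/2) \<and> (\<forall>i j. C i j \<noteq> 0 \<longrightarrow> b < j \<and> j < i \<and> i \<le> b + k)
      \<and> (\<forall>i\<in>{b<..b+k}. L < cc i \<and> cc i \<le> U)
      \<and> (\<forall>i\<in>{b<..b+k}. y i = net_flow {b<..b+k} C i + cc i)"
proof (cases "k = 0")
  case True
  thus ?thesis by (intro exI[of _ "\<lambda>_ _. 0"] exI[of _ "\<lambda>_. L"]) auto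
next
  case False
  \<comment> \<open>finitely many strict inequalities survive raising L by the smallest slack eps\<close>
  define slack where "slack = (\<lambda>m. ((\<Sum>i\<in>{b<..b+m}. y i) + (3/2) * real m * (real k - real m) - L * real m) / real m)"
  define eps where "eps = Min (slack ` {1..k})"
  have "slack m > 0" if "m \<in> {1..k}" for m
    using lo[of m] that unfolding slack_def by auto
  hence eps: "eps > 0" unfolding eps_def using False by (subst Min_gr_iff) auto
  have "(\<Sum>i\<in>{b<..b+m}. y i) \<ge> -(3/2) * real m * (real k - real m) + (L + eps) * real m"
    if "1 \<le> m" "m \<le> k" for m
  proof -
    have "eps \<le> slack m" unfolding eps_def using that by simp
    hence "eps * real m \<le> slack m * real m" by (simp add: mult_right_mono)
    also have "slack m * real m = (\<Sum>i\<in>{b<..b+m}. y i) + (3/2) * real m * (real k - real m) - L * real m"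
      unfolding slack_def using that by simp
    finally show ?thesis by (simp add: algebra_simps)
  qed
  then obtain C cc where "(\<forall>i j. 0 \<le> C i j \<and> C i j \<le> 3/2)" "(\<forall>i j. C i j \<noteq> 0 \<longrightarrow> b < j \<and> j < i \<and> i \<le> b + k)"
      "(\<forall>i\<in>{b<..b+k}. L + eps \<le> cc i \<and> cc i \<le> U)" "(\<forall>i\<in>{b<..b+k}. y i = net_flow {b<..b+k} C i + cc i)"
    using monotone_net_flow_box[of b k y "L + eps" U, OF mono _ up] by blast
  thus ?thesis using eps by (intro exI[of _ C] exI[of _ cc]) fastforce
qed

section \<open>The decomposition defining e\<close>

definition prefix_pot :: "nat \<Rightarrow> nat \<Rightarrow> (nat \<Rightarrow> real) \<Rightarrow> nat \<Rightarrow> real" where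
  "prefix_pot a d x l = (\<Sum>i\<in>{1..l}. x i) + (3/2) * real l * (real d - real l) + (real a / 2) * real l"

lemma p_l_eq_prefix_pot: "p_l a d mu l psi = prefix_pot a d (shifted d mu psi) l"
  by (simp add: p_l_def prefix_pot_def)

text \<open>The decomposition defining e(psi), with the three kinds of edges merged into one lower
  triangular flow that is saturated on the edges from {e+1..d} to {1..e}.\<close>

definition e_flow :: "nat \<Rightarrow> nat \<Rightarrow> (nat \<Rightarrow> real) \<Rightarrow> nat \<Rightarrow> (nat \<Rightarrow> nat \<Rightarrow> real) \<Rightarrow> (nat \<Rightarrow> real) \<Rightarrow> bool" where
  "e_flow a d x e C cc \<longleftrightarrow> (\<forall>i j. 0 \<le> C i j \<and> C i j \<le> 3/2) \<and> (\<forall>i j. C i j \<noteq> 0 \<longrightarrow> j < i)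
     \<and> (\<forall>i j. j \<le> e \<longrightarrow> e < i \<longrightarrow> C i j = 3/2)
     \<and> (\<forall>i. 1 \<le> i \<longrightarrow> i \<le> e \<longrightarrow> -(real a + 2)/2 \<le> cc i \<and> cc i \<le> - real a / 2)
     \<and> (\<forall>i. e < i \<longrightarrow> i \<le> d \<longrightarrow> - real a / 2 < cc i \<and> cc i \<le> real a / 2)
     \<and> (\<forall>m\<in>{1..d}. x m = net_flow {1..d} C m + cc m)"

definition decomp_flow :: "nat \<Rightarrow> (nat \<Rightarrow> nat \<Rightarrow> real) \<Rightarrow> nat \<Rightarrow> nat \<Rightarrow> real" where
  "decomp_flow e c i j = (if j < i \<and> i \<le> e then c i j else 0) + (if e < j \<and> j < i then c i j else 0)
     + (if j \<le> e \<and> e < i then 3/2 else 0)"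

lemma decomp_flow_eq:
  assumes "\<forall>i j. C i j \<noteq> 0 \<longrightarrow> j < i" "\<forall>i j. j \<le> e \<longrightarrow> e < i \<longrightarrow> C i j = 3/2"
  shows "decomp_flow e C = C"
proof (intro ext)
  fix i j
  show "decomp_flow e C i j = C i j"
  proof (cases "j < i")
    case False
    hence "C i j = 0" using assms(1) by blast
    thus ?thesis using False by (simp add: decomp_flow_def)
  qed (use assms(2) in \<open>auto simp: decomp_flow_def\<close>)
qed

lemma sum_e_decomp_eq_net_flow:
  assumes "m \<in> {1..d}"
  shows "(\<Sum>i\<in>{1..d}. \<Sum>j\<in>{1..d}. if j < i \<and> i \<le> e then c i j * (beta i m - beta j m) else 0)
        + (\<Sum>i\<in>{1..d}. \<Sum>j\<in>{1..d}. if e < j \<and> j < i then c i j * (beta i m - beta j m) else 0)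
        + (\<Sum>i\<in>{1..d}. \<Sum>j\<in>{1..d}. if j \<le> e \<and> e < i then (3/2) * (beta i m - beta j m) else 0)
        + (\<Sum>i\<in>{1..d}. cc i * beta i m)
      = net_flow {1..d} (decomp_flow e c) m + cc m"
proof -
  have "(\<Sum>i\<in>{1..d}. \<Sum>j\<in>{1..d}. if j < i \<and> i \<le> e then c i j * (beta i m - beta j m) else 0)
        + (\<Sum>i\<in>{1..d}. \<Sum>j\<in>{1..d}. if e < j \<and> j < i then c i j * (beta i m - beta j m) else 0)
        + (\<Sum>i\<in>{1..d}. \<Sum>j\<in>{1..d}. if j \<le> e \<and> e < i then (3/2) * (beta i m - beta j m) else 0)
      = (\<Sum>i\<in>{1..d}. \<Sum>j\<in>{1..d}. decomp_flow e c i j * (beta i m - beta j m))"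
    by (simp add: sum.distrib[symmetric]) (intro sum.cong refl, simp add: decomp_flow_def field_simps)
  also have "\<dots> = net_flow {1..d} (decomp_flow e c) m"
    using sum_beta_diff_eq_net_flow assms by simp
  finally show ?thesis using sum_mult_beta[OF assms, of cc 1] by simp
qed

lemma e_decomp_iff_e_flow: "e_decomp a d x e \<longleftrightarrow> (\<exists>C cc. e_flow a d x e C cc)"
proof
  assume "e_decomp a d x e"
  then obtain c cc where c: "\<forall>i j. 0 \<le> c i j \<and> c i j \<le> 3/2"
      and "\<forall>i. 1 \<le> i \<longrightarrow> i \<le> e \<longrightarrow> -(real a + 2)/2 \<le> cc i \<and> cc i \<le> - real a / 2"
      and "\<forall>i. e < i \<longrightarrow> i \<le> d \<longrightarrow> - real a / 2 < cc i \<and> cc i \<le> real a / 2"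
      and "\<forall>m\<in>{1..d}. x m =
          (\<Sum>i\<in>{1..d}. \<Sum>j\<in>{1..d}. if j < i \<and> i \<le> e then c i j * (beta i m - beta j m) else 0)
        + (\<Sum>i\<in>{1..d}. \<Sum>j\<in>{1..d}. if e < j \<and> j < i then c i j * (beta i m - beta j m) else 0)
        + (\<Sum>i\<in>{1..d}. \<Sum>j\<in>{1..d}. if j \<le> e \<and> e < i then (3/2) * (beta i m - beta j m) else 0)
        + (\<Sum>i\<in>{1..d}. cc i * beta i m)"
    unfolding e_decomp_def by blast
  moreover have "0 \<le> decomp_flow e c i j \<and> decomp_flow e c i j \<le> 3/2" for i j
    using c by (auto simp: decomp_flow_def)
  ultimately have "e_flow a d x e (decomp_flow e c) cc"
    unfolding e_flow_def using sum_e_decomp_eq_net_flow by (auto simp: decomp_flow_def)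
  thus "\<exists>C cc. e_flow a d x e C cc" by blast
next
  assume "\<exists>C cc. e_flow a d x e C cc"
  then obtain C cc where flow: "e_flow a d x e C cc" by blast
  have "decomp_flow e C = C"
    using flow decomp_flow_eq unfolding e_flow_def by blast
  hence "\<forall>m\<in>{1..d}. x m =
          (\<Sum>i\<in>{1..d}. \<Sum>j\<in>{1..d}. if j < i \<and> i \<le> e then C i j * (beta i m - beta j m) else 0)
        + (\<Sum>i\<in>{1..d}. \<Sum>j\<in>{1..d}. if e < j \<and> j < i then C i j * (beta i m - beta j m) else 0)
        + (\<Sum>i\<in>{1..d}. \<Sum>j\<in>{1..d}. if j \<le> e \<and> e < i then (3/2) * (beta i m - beta j m) else 0)
        + (\<Sum>i\<in>{1..d}. cc i * beta i m)"
    using flow sum_e_decomp_eq_net_flow[of _ d e C cc] unfolding e_flow_def by simp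
  thus "e_decomp a d x e"
    unfolding e_decomp_def using flow unfolding e_flow_def
    by (intro exI[of _ C] exI[of _ cc]) simp
qed

lemma e_flow_prefix_pot:
  assumes flow: "e_flow a d x e C cc" and ld: "l \<le> d"
  shows "prefix_pot a d x l \<ge> (\<Sum>m\<in>{1..l}. cc m + real a / 2)"
    and "l = e \<Longrightarrow> prefix_pot a d x l = (\<Sum>m\<in>{1..l}. cc m + real a / 2)"
proof -
  have C: "\<forall>i j. 0 \<le> C i j \<and> C i j \<le> 3/2" and lower: "\<forall>i j. C i j \<noteq> 0 \<longrightarrow> j < i"
    and sat: "\<forall>i j. j \<le> e \<longrightarrow> e < i \<longrightarrow> C i j = 3/2"
    and x: "\<forall>m\<in>{1..d}. x m = net_flow {1..d} C m + cc m"
    using flow unfolding e_flow_def by auto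
  have S: "{1..l} \<subseteq> {1..d}" using ld by auto
  have cD: "real (card ({1..d} - {1..l})) = real d - real l"
    using ld by (simp add: card_Diff_subset of_nat_diff)
  have "(\<Sum>m\<in>{1..l}. x m) = (\<Sum>m\<in>{1..l}. net_flow {1..d} C m) + (\<Sum>m\<in>{1..l}. cc m)"
    using x S by (simp add: sum.distrib[symmetric] subset_iff)
  moreover have "(\<Sum>m\<in>{1..l}. \<Sum>j\<in>{1..d}-{1..l}. C m j) = 0"
  proof (intro sum.neutral ballI)
    fix m j assume "m \<in> {1..l}" "j \<in> {1..d}-{1..l}"
    hence "\<not> j < m" by auto
    thus "C m j = 0" using lower by blast
  qed
  ultimately have xs: "(\<Sum>m\<in>{1..l}. x m) = (\<Sum>m\<in>{1..l}. cc m) - (\<Sum>m\<in>{1..l}. \<Sum>i\<in>{1..d}-{1..l}. C i m)"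
    using sum_net_flow_subset[of "{1..d}" "{1..l}" C] S by simp
  have "(\<Sum>m\<in>{1..l}. \<Sum>i\<in>{1..d}-{1..l}. C i m) \<le> (3/2) * real l * (real d - real l)"
    using sum_sum_le_card[where C="\<lambda>m i. C i m" and c="3/2" and S="{1..l}" and T="{1..d}-{1..l}"] C cD
    by simp
  thus "prefix_pot a d x l \<ge> (\<Sum>m\<in>{1..l}. cc m + real a / 2)"
    using xs unfolding prefix_pot_def by (simp add: sum.distrib)
  assume "l = e"
  hence "(\<Sum>m\<in>{1..l}. \<Sum>i\<in>{1..d}-{1..l}. C i m) = (\<Sum>m\<in>{1..l}. \<Sum>i\<in>{1..d}-{1..l}. 3/2)"
    using sat by (intro sum.cong refl) auto
  thus "prefix_pot a d x l = (\<Sum>m\<in>{1..l}. cc m + real a / 2)"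
    using xs cD unfolding prefix_pot_def by (simp add: sum.distrib)
qed

lemma e_flow_argmin:
  assumes flow: "e_flow a d x e C cc" and ed: "e \<le> d" and ld: "l \<le> d"
  shows "prefix_pot a d x e \<le> prefix_pot a d x l"
    and "e < l \<Longrightarrow> prefix_pot a d x e < prefix_pot a d x l"
proof -
  have low: "\<forall>i. 1 \<le> i \<longrightarrow> i \<le> e \<longrightarrow> cc i + real a / 2 \<le> 0"
    and high: "\<forall>i. e < i \<longrightarrow> i \<le> d \<longrightarrow> 0 < cc i + real a / 2"
    using flow unfolding e_flow_def by auto
  have pe: "prefix_pot a d x e = (\<Sum>m\<in>{1..e}. cc m + real a / 2)"
    using e_flow_prefix_pot(2)[OF flow ed] by simp
  have pl: "prefix_pot a d x l \<ge> (\<Sum>m\<in>{1..l}. cc m + real a / 2)"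
    using e_flow_prefix_pot(1)[OF flow ld] .
  have split: "(\<Sum>m\<in>{1..n}. cc m + real a / 2) = (\<Sum>m\<in>{1..k}. cc m + real a / 2) + (\<Sum>m\<in>{k<..n}. cc m + real a / 2)"
    if "k \<le> n" for k n
    using sum_greaterThanAtMost_split[OF that, of "\<lambda>m. cc m + real a / 2" 0]
    by (simp add: atLeastSucAtMost_greaterThanAtMost[symmetric])
  show "prefix_pot a d x e \<le> prefix_pot a d x l"
  proof (cases "l \<le> e")
    case True
    have "(\<Sum>m\<in>{l<..e}. cc m + real a / 2) \<le> 0"
      using low by (intro sum_nonpos) auto
    thus ?thesis using pl pe split[OF True] by linarith
  next
    case False
    have "(\<Sum>m\<in>{e<..l}. cc m + real a / 2) \<ge> 0"
      using high ld by (intro sum_nonneg) (auto intro: less_imp_le)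
    thus ?thesis using pl pe split[of e l] False by linarith
  qed
  assume "e < l"
  hence "(\<Sum>m\<in>{e<..l}. cc m + real a / 2) > 0"
    using high ld by (intro sum_pos) auto
  thus "prefix_pot a d x e < prefix_pot a d x l" using pl pe split[of e l] \<open>e < l\<close> by linarith
qed

lemma e_of_eqI:
  assumes ed: "e \<le> d" and dec: "e_decomp a d (shifted d mu psi) e"
  shows "e_of a d mu psi = e"
  unfolding e_of_def
proof (rule the_equality)
  show "e \<le> d \<and> e_decomp a d (shifted d mu psi) e" using ed dec by simp
  fix e' assume e': "e' \<le> d \<and> e_decomp a d (shifted d mu psi) e'"
  obtain C cc C' cc' where "e_flow a d (shifted d mu psi) e C cc" "e_flow a d (shifted d mu psi) e' C' cc'"
    using dec e' e_decomp_iff_e_flow by metis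
  from e_flow_argmin(2)[OF this(1) ed, of e'] e_flow_argmin(2)[OF this(2) _ ed]
    e_flow_argmin(1)[OF this(1) ed, of e'] e_flow_argmin(1)[OF this(2) _ ed] e'
  show "e' = e" by (cases e e' rule: linorder_cases) auto
qed

section \<open>Existence of the decomposition\<close>

lemma lower_block_decomp:
  assumes mono: "\<And>i j. 1 \<le> i \<Longrightarrow> i \<le> j \<Longrightarrow> j \<le> d \<Longrightarrow> x i \<le> x j" and V: "flow_rep a d x"
    and ed: "e \<le> d" and min: "\<And>l. l \<le> d \<Longrightarrow> prefix_pot a d x e \<le> prefix_pot a d x l"
  obtains C cc where "\<forall>i j. 0 \<le> C i j \<and> C i j \<le> 3/2" "\<forall>i j. C i j \<noteq> 0 \<longrightarrow> 0 < j \<and> j < i \<and> i \<le> e"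
    "\<forall>i\<in>{1..e}. -(real a + 2)/2 \<le> cc i \<and> cc i \<le> - real a / 2"
    "\<forall>i\<in>{1..e}. x i + (3/2) * (real d - real e) = net_flow {1..e} C i + cc i"
proof -
  define y where "y = (\<lambda>i. x i + (3/2) * (real d - real e))"
  have ivl: "{0<..n} = {1..n}" for n :: nat by auto
  have "\<exists>C cc. (\<forall>i j. 0 \<le> C i j \<and> C i j \<le> 3/2) \<and> (\<forall>i j. C i j \<noteq> 0 \<longrightarrow> 0 < j \<and> j < i \<and> i \<le> 0 + e)
      \<and> (\<forall>i\<in>{0<..0+e}. -(real a + 2)/2 \<le> cc i \<and> cc i \<le> - real a / 2)
      \<and> (\<forall>i\<in>{0<..0+e}. y i = net_flow {0<..0+e} C i + cc i)"
  proof (rule monotone_net_flow_box)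
    show "y i \<le> y j" if "0 < i" "i \<le> j" "j \<le> 0 + e" for i j
      unfolding y_def using mono that ed by simp
    show "(\<Sum>i\<in>{0<..0+m}. y i) \<ge> -(3/2) * real m * (real e - real m) + (-(real a + 2)/2) * real m"
      if "1 \<le> m" "m \<le> e" for m
    proof -
      have "{1..m} \<subseteq> {1..d}" using that ed by auto
      from flow_rep_sum_bounds(1)[OF V this]
      have "(\<Sum>i\<in>{1..m}. x i) \<ge> -(3/2) * real m * (real d - real m) - (real a + 2)/2 * real m"
        by simp
      moreover have "(\<Sum>i\<in>{0<..0+m}. y i) = (\<Sum>i\<in>{1..m}. x i) + real m * ((3/2) * (real d - real e))"
        unfolding y_def by (simp add: ivl sum.distrib)
      moreover have "-(3/2) * real m * (real d - real m) + real m * ((3/2) * (real d - real e))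
          = -(3/2) * real m * (real e - real m)"
        by (simp add: field_simps)
      ultimately show ?thesis by linarith
    qed
    show "(\<Sum>i\<in>{0+m<..0+e}. y i) \<le> (3/2) * real m * (real e - real m) + (- real a / 2) * (real e - real m)"
      if me: "m < e" for m
    proof -
      have "prefix_pot a d x e \<le> prefix_pot a d x m" using min me ed by simp
      moreover have "(\<Sum>i\<in>{1..e}. x i) = (\<Sum>i\<in>{1..m}. x i) + (\<Sum>i\<in>{m<..e}. x i)"
        using sum_greaterThanAtMost_split[of m e x 0] me by (simp add: ivl)
      moreover have "(\<Sum>i\<in>{0+m<..0+e}. y i) = (\<Sum>i\<in>{m<..e}. x i) + (real e - real m) * ((3/2) * (real d - real e))"
        unfolding y_def using me by (simp add: sum.distrib of_nat_diff)
      moreover have "(3/2) * real m * (real d - real m) - (3/2) * real e * (real d - real e)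
          + (real e - real m) * ((3/2) * (real d - real e)) = (3/2) * real m * (real e - real m)"
        by (simp add: field_simps)
      moreover have "(- real a / 2) * (real e - real m) = real a / 2 * real m - real a / 2 * real e"
        by (simp add: field_simps)
      ultimately show ?thesis unfolding prefix_pot_def by linarith
    qed
  qed
  then obtain C cc where "\<forall>i j. 0 \<le> C i j \<and> C i j \<le> 3/2" "\<forall>i j. C i j \<noteq> 0 \<longrightarrow> 0 < j \<and> j < i \<and> i \<le> 0 + e"
    "\<forall>i\<in>{0<..0+e}. -(real a + 2)/2 \<le> cc i \<and> cc i \<le> - real a / 2"
    "\<forall>i\<in>{0<..0+e}. y i = net_flow {0<..0+e} C i + cc i"
    by blast
  thus ?thesis using that[of C cc] unfolding y_def by (simp add: ivl)
qed

lemma upper_block_decomp: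
  assumes mono: "\<And>i j. 1 \<le> i \<Longrightarrow> i \<le> j \<Longrightarrow> j \<le> d \<Longrightarrow> x i \<le> x j" and V: "flow_rep a d x"
    and ed: "e \<le> d" and above: "\<And>l. e < l \<Longrightarrow> l \<le> d \<Longrightarrow> prefix_pot a d x e < prefix_pot a d x l"
  obtains C cc where "\<forall>i j. 0 \<le> C i j \<and> C i j \<le> 3/2" "\<forall>i j. C i j \<noteq> 0 \<longrightarrow> e < j \<and> j < i \<and> i \<le> d"
    "\<forall>i\<in>{e<..d}. - real a / 2 < cc i \<and> cc i \<le> real a / 2"
    "\<forall>i\<in>{e<..d}. x i - (3/2) * real e = net_flow {e<..d} C i + cc i"
proof -
  define y where "y = (\<lambda>i. x i - (3/2) * real e)"
  have de: "e + (d - e) = d" "real (d - e) = real d - real e" using ed by (simp_all add: of_nat_diff)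
  have "\<exists>C cc. (\<forall>i j. 0 \<le> C i j \<and> C i j \<le> 3/2) \<and> (\<forall>i j. C i j \<noteq> 0 \<longrightarrow> e < j \<and> j < i \<and> i \<le> e + (d - e))
      \<and> (\<forall>i\<in>{e<..e+(d-e)}. - real a / 2 < cc i \<and> cc i \<le> real a / 2)
      \<and> (\<forall>i\<in>{e<..e+(d-e)}. y i = net_flow {e<..e+(d-e)} C i + cc i)"
  proof (rule monotone_net_flow_box_strict)
    show "y i \<le> y j" if "e < i" "i \<le> j" "j \<le> e + (d - e)" for i j
      unfolding y_def using mono that ed by simp
    show "(\<Sum>i\<in>{e<..e+m}. y i) > -(3/2) * real m * (real (d - e) - real m) + (- real a / 2) * real m"
      if m: "1 \<le> m" "m \<le> d - e" for m
    proof -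
      have "prefix_pot a d x e < prefix_pot a d x (e + m)" using above m by simp
      moreover have "(\<Sum>i\<in>{1..e+m}. x i) = (\<Sum>i\<in>{1..e}. x i) + (\<Sum>i\<in>{e<..e+m}. x i)"
        using sum_greaterThanAtMost_split[of e "e+m" x 0]
        by (simp add: atLeastSucAtMost_greaterThanAtMost[symmetric])
      moreover have "(\<Sum>i\<in>{e<..e+m}. y i) = (\<Sum>i\<in>{e<..e+m}. x i) - real m * ((3/2) * real e)"
        unfolding y_def by (simp add: sum_subtractf)
      moreover have "(3/2) * real e * (real d - real e) - (3/2) * real (e + m) * (real d - real (e + m))
          - real m * ((3/2) * real e) = -(3/2) * real m * ((real d - real e) - real m)"
        by (simp add: field_simps)
      moreover have "(real a / 2) * real (e + m) = (real a / 2) * real e + (real a / 2) * real m"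
        by (simp add: field_simps)
      ultimately show ?thesis unfolding prefix_pot_def de by linarith
    qed
    show "(\<Sum>i\<in>{e+m<..e+(d-e)}. y i) \<le> (3/2) * real m * (real (d - e) - real m) + (real a / 2) * (real (d - e) - real m)"
      if md: "m < d - e" for m
    proof -
      have card: "real (card {e+m<..d}) = real d - real e - real m" using md by (simp add: of_nat_diff)
      have "{e+m<..d} \<subseteq> {1..d}" by auto
      from flow_rep_sum_bounds(2)[OF V this]
      have "(\<Sum>i\<in>{e+m<..d}. x i) \<le> (3/2) * (real d - real e - real m) * (real d - (real d - real e - real m))
          + real a / 2 * (real d - real e - real m)"
        by (simp only: card)
      moreover have "(\<Sum>i\<in>{e+m<..e+(d-e)}. y i) = (\<Sum>i\<in>{e+m<..d}. x i) - (real d - real e - real m) * ((3/2) * real e)"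
        unfolding y_def using de card by (simp add: sum_subtractf)
      moreover have "(3/2) * (real d - real e - real m) * (real d - (real d - real e - real m))
          - (real d - real e - real m) * ((3/2) * real e) = (3/2) * real m * ((real d - real e) - real m)"
        by (simp add: field_simps)
      ultimately show ?thesis unfolding de by linarith
    qed
  qed
  then obtain C cc where "\<forall>i j. 0 \<le> C i j \<and> C i j \<le> 3/2" "\<forall>i j. C i j \<noteq> 0 \<longrightarrow> e < j \<and> j < i \<and> i \<le> e + (d - e)"
    "\<forall>i\<in>{e<..e+(d-e)}. - real a / 2 < cc i \<and> cc i \<le> real a / 2"
    "\<forall>i\<in>{e<..e+(d-e)}. y i = net_flow {e<..e+(d-e)} C i + cc i"
    by blast
  thus ?thesis using that[of C cc] unfolding y_def de by simp
qed

text \<open>The saturated edges from {e+1..d} to {1..e} shift the two blocks by -3/2 (d-e) and 3/2 e;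
  this is why the blocks were decomposed after shifting.\<close>

lemma net_flow_saturated_cross:
  assumes ed: "e \<le> d" and m: "m \<in> {1..d}"
  shows "net_flow {1..d} (\<lambda>i j. if j \<le> e \<and> e < i then 3/2 else 0) m
    = (if m \<le> e then - (3/2) * (real d - real e) else (3/2) * real e)"
proof -
  have "{i\<in>{1..d}. e < i} = {e<..d}" "{j\<in>{1..d}. j \<le> e} = {1..e}" using ed by auto
  thus ?thesis
    using ed sum_if_const[where d=d and P="\<lambda>i. e < i" and c="3/2"]
      sum_if_const[where d=d and P="\<lambda>j. j \<le> e" and c="3/2"]
    by (cases "m \<le> e") (simp_all add: net_flow_def of_nat_diff)
qed

lemma e_flow_of_blocks:
  assumes ed: "e \<le> d"
    and C1: "\<forall>i j. 0 \<le> C1 i j \<and> C1 i j \<le> 3/2" "\<forall>i j. C1 i j \<noteq> 0 \<longrightarrow> 0 < j \<and> j < i \<and> i \<le> e"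
      "\<forall>i\<in>{1..e}. -(real a + 2)/2 \<le> cc1 i \<and> cc1 i \<le> - real a / 2"
      "\<forall>i\<in>{1..e}. x i + (3/2) * (real d - real e) = net_flow {1..e} C1 i + cc1 i"
    and C2: "\<forall>i j. 0 \<le> C2 i j \<and> C2 i j \<le> 3/2" "\<forall>i j. C2 i j \<noteq> 0 \<longrightarrow> e < j \<and> j < i \<and> i \<le> d"
      "\<forall>i\<in>{e<..d}. - real a / 2 < cc2 i \<and> cc2 i \<le> real a / 2"
      "\<forall>i\<in>{e<..d}. x i - (3/2) * real e = net_flow {e<..d} C2 i + cc2 i"
  shows "e_flow a d x e (\<lambda>i j. C1 i j + C2 i j + (if j \<le> e \<and> e < i then 3/2 else 0))
    (\<lambda>i. if i \<le> e then cc1 i else cc2 i)"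
proof -
  define X where "X = (\<lambda>i j. if j \<le> e \<and> e < i then (3/2::real) else 0)"
  have disj: "C1 i j = 0 \<or> C2 i j = 0" for i j
    using C1(2) C2(2) by (meson le_less_trans less_asym)
  have "C1 i j \<noteq> 0 \<Longrightarrow> i \<in> {1..e} \<and> j \<in> {1..e}" "C2 i j \<noteq> 0 \<Longrightarrow> i \<in> {e<..d} \<and> j \<in> {e<..d}" for i j
    using C1(2) C2(2) by force+
  hence supp: "net_flow {1..d} C1 m = (if m \<in> {1..e} then net_flow {1..e} C1 m else 0)"
    "net_flow {1..d} C2 m = (if m \<in> {e<..d} then net_flow {e<..d} C2 m else 0)" for m
    using ed by (intro net_flow_supported; auto)+
  have x: "x m = net_flow {1..d} (\<lambda>i j. C1 i j + C2 i j + X i j) m + (if m \<le> e then cc1 m else cc2 m)"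
    if m: "m \<in> {1..d}" for m
  proof (cases "m \<le> e")
    case True
    thus ?thesis using C1(4)[rule_format, of m] supp[of m] net_flow_saturated_cross[OF ed m] m
      unfolding X_def by (simp add: net_flow_add)
  next
    case False
    thus ?thesis using C2(4)[rule_format, of m] supp[of m] net_flow_saturated_cross[OF ed m] m
      unfolding X_def by (simp add: net_flow_add)
  qed
  have cross: "C1 i j = 0 \<and> C2 i j = 0" if "j \<le> e \<and> e < i" for i j
    using that C1(2) C2(2) by force
  have bounds: "0 \<le> C1 i j + C2 i j + X i j \<and> C1 i j + C2 i j + X i j \<le> 3/2" for i j
  proof (cases "j \<le> e \<and> e < i")
    case True thus ?thesis using cross[OF True] by (simp add: X_def)
  next
    case False thus ?thesis using disj[of i j] C1(1) C2(1) by (auto simp: X_def)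
  qed
  have lower: "C1 i j + C2 i j + X i j \<noteq> 0 \<Longrightarrow> j < i" for i j
    using C1(2) C2(2) unfolding X_def
    by (cases "C1 i j = 0"; cases "C2 i j = 0") (auto split: if_splits)
  have sat: "j \<le> e \<Longrightarrow> e < i \<Longrightarrow> C1 i j + C2 i j + X i j = 3/2" for i j
    using cross[of j i] by (simp add: X_def)
  have "e_flow a d x e (\<lambda>i j. C1 i j + C2 i j + X i j) (\<lambda>i. if i \<le> e then cc1 i else cc2 i)"
    unfolding e_flow_def
  proof (intro conjI allI impI ballI)
    fix m assume "m \<in> {1..d}"
    thus "x m = net_flow {1..d} (\<lambda>i j. C1 i j + C2 i j + X i j) m + (if m \<le> e then cc1 m else cc2 m)"
      by (rule x)
  qed (use bounds lower sat C1(3) C2(3) in auto)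
  thus ?thesis unfolding X_def .
qed

lemma ex_e_flow:
  assumes mono: "\<And>i j. 1 \<le> i \<Longrightarrow> i \<le> j \<Longrightarrow> j \<le> d \<Longrightarrow> x i \<le> x j" and V: "flow_rep a d x"
  shows "\<exists>e\<le>d. \<exists>C cc. e_flow a d x e C cc"
proof -
  \<comment> \<open>e is the largest minimiser of prefix_pot, as forced by e_flow_argmin\<close>
  define P where "P = prefix_pot a d x"
  define ES where "ES = {l \<in> {0..d}. P l = Min (P ` {0..d})}"
  define e where "e = Max ES"
  have "Min (P ` {0..d}) \<in> P ` {0..d}" by (intro Min_in) auto
  then obtain l where "l \<in> {0..d}" "P l = Min (P ` {0..d})" by (metis imageE)
  hence ES: "ES \<noteq> {}" "finite ES" unfolding ES_def by auto
  hence "e \<in> ES" unfolding e_def by simp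
  hence ed: "e \<le> d" and Pe: "P e = Min (P ` {0..d})" unfolding ES_def by auto
  have min: "P e \<le> P l" if "l \<le> d" for l
    unfolding Pe using that by (intro Min_le) auto
  have above: "P e < P l" if "e < l" "l \<le> d" for l
  proof -
    have "l \<notin> ES" using that ES unfolding e_def by (meson Max_ge leD)
    hence "P l \<noteq> P e" using Pe that(2) unfolding ES_def by auto
    thus ?thesis using min[OF that(2)] by simp
  qed
  obtain C1 cc1 where "\<forall>i j. 0 \<le> C1 i j \<and> C1 i j \<le> 3/2" "\<forall>i j. C1 i j \<noteq> 0 \<longrightarrow> 0 < j \<and> j < i \<and> i \<le> e"
    "\<forall>i\<in>{1..e}. -(real a + 2)/2 \<le> cc1 i \<and> cc1 i \<le> - real a / 2"
    "\<forall>i\<in>{1..e}. x i + (3/2) * (real d - real e) = net_flow {1..e} C1 i + cc1 i"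
    using lower_block_decomp[OF mono V ed] min unfolding P_def by blast
  moreover obtain C2 cc2 where "\<forall>i j. 0 \<le> C2 i j \<and> C2 i j \<le> 3/2" "\<forall>i j. C2 i j \<noteq> 0 \<longrightarrow> e < j \<and> j < i \<and> i \<le> d"
    "\<forall>i\<in>{e<..d}. - real a / 2 < cc2 i \<and> cc2 i \<le> real a / 2"
    "\<forall>i\<in>{e<..d}. x i - (3/2) * real e = net_flow {e<..d} C2 i + cc2 i"
    using upper_block_decomp[OF mono V ed] above unfolding P_def by blast
  ultimately have "e_flow a d x e (\<lambda>i j. C1 i j + C2 i j + (if j \<le> e \<and> e < i then 3/2 else 0))
      (\<lambda>i. if i \<le> e then cc1 i else cc2 i)"
    by (rule e_flow_of_blocks[OF ed])
  thus ?thesis using ed by blast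
qed

lemma rho_eq:
  assumes m: "m \<in> {1..d}"
  shows "rho d m = (real m - 1 - (real d - real m)) / 2"
proof -
  define K where "K = (\<lambda>i j::nat. if j < i then (1::real) else 0)"
  have "(\<Sum>i\<in>{1..d}. \<Sum>j\<in>{1..d}. if j < i then beta i m - beta j m else 0)
      = (\<Sum>i\<in>{1..d}. \<Sum>j\<in>{1..d}. K i j * (beta i m - beta j m))"
    by (intro sum.cong refl) (simp add: K_def)
  also have "\<dots> = (\<Sum>j\<in>{1..d}. K m j) - (\<Sum>i\<in>{1..d}. K i m)"
    using sum_beta_diff_eq_net_flow[of "{1..d}" m K] m by (simp add: net_flow_def)
  also have "(\<Sum>j\<in>{1..d}. K m j) = real (card {j\<in>{1..d}. j < m})"
    unfolding K_def using sum_if_const[where d=d and P="\<lambda>j. j < m" and c=1] by simp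
  also have "(\<Sum>i\<in>{1..d}. K i m) = real (card {i\<in>{1..d}. m < i})"
    unfolding K_def using sum_if_const[where d=d and P="\<lambda>i. m < i" and c=1] by simp
  also have "{j\<in>{1..d}. j < m} = {1..<m}" using m by auto
  also have "{i\<in>{1..d}. m < i} = {m<..d}" using m by auto
  finally show ?thesis using m unfolding rho_def by (simp add: of_nat_diff)
qed

lemma shifted_mono:
  assumes "dominant_weight d psi" "1 \<le> i" "i \<le> j" "j \<le> d"
  shows "shifted d mu psi i \<le> shifted d mu psi j"
proof -
  have "psi i \<le> psi j" using assms unfolding dominant_weight_def dominant_def by blast
  moreover have "rho d i \<le> rho d j" using assms rho_eq[of i d] rho_eq[of j d] by simp
  ultimately show ?thesis by (simp add: shifted_def delta_def)
qed

lemma e_of_e_flow: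
  assumes "dominant_weight d psi" "shifted d mu psi \<in> Vzon a d"
  obtains C cc where "e_of a d mu psi \<le> d" "e_flow a d (shifted d mu psi) (e_of a d mu psi) C cc"
proof -
  obtain e C cc where "e \<le> d" "e_flow a d (shifted d mu psi) e C cc"
    using ex_e_flow[of d "shifted d mu psi" a] shifted_mono[OF assms(1)] flow_rep_if_in_Vzon[OF assms(2)]
    by blast
  moreover from this have "e_of a d mu psi = e"
    using e_of_eqI e_decomp_iff_e_flow by blast
  ultimately show ?thesis using that by simp
qed

lemma e_of_le:
  assumes "dominant_weight d psi" "shifted d mu psi \<in> Vzon a d"
  shows "e_of a d mu psi \<le> d"
  using e_of_e_flow[OF assms] by metis

lemma p_of_le_p_l:
  assumes "dominant_weight d psi" "shifted d mu psi \<in> Vzon a d" "l \<le> d"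
  shows "p_of a d mu psi \<le> p_l a d mu l psi"
    and "e_of a d mu psi < l \<Longrightarrow> p_of a d mu psi < p_l a d mu l psi"
proof -
  obtain C cc where "e_of a d mu psi \<le> d" "e_flow a d (shifted d mu psi) (e_of a d mu psi) C cc"
    using e_of_e_flow[OF assms(1,2)] .
  from e_flow_argmin[OF this(2,1) assms(3)]
  show "p_of a d mu psi \<le> p_l a d mu l psi"
    and "e_of a d mu psi < l \<Longrightarrow> p_of a d mu psi < p_l a d mu l psi"
    by (simp_all add: p_of_def p_l_eq_prefix_pot)
qed

section \<open>Subtracting a sub-multiset of W\<close>

lemma sum_mset_image_eq_sum_count:
  fixes f :: "'a \<Rightarrow> real"
  assumes "finite A" "set_mset M \<subseteq> A"
  shows "sum_mset (image_mset f M) = (\<Sum>x\<in>A. real (count M x) * f x)"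
  using assms(2)
proof (induction M)
  case empty thus ?case by simp
next
  case (add b M)
  hence bA: "b \<in> A" and MA: "set_mset M \<subseteq> A" by auto
  have "(\<Sum>x\<in>A. real (count (add_mset b M) x) * f x) = (\<Sum>x\<in>A. real (count M x) * f x + (if x = b then f x else 0))"
    by (intro sum.cong refl) (auto simp: algebra_simps)
  also have "\<dots> = (\<Sum>x\<in>A. real (count M x) * f x) + f b" using assms(1) bA by (simp add: sum.distrib)
  finally show ?case using add.IH[OF MA] by simp
qed

lemma sum_sum_mset_swap:
  fixes I :: "(nat \<Rightarrow> real) multiset"
  shows "(\<Sum>m\<in>S. sum_mset (image_mset (\<lambda>b. b m) I)) = sum_mset (image_mset (\<lambda>b. \<Sum>m\<in>S. b m) I)"
  by (induction I) (simp_all add: sum.distrib)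

definition beta_diff :: "nat \<Rightarrow> nat \<Rightarrow> nat \<Rightarrow> real" where
  "beta_diff i j = (\<lambda>m. beta i m - beta j m)"

definition neg_beta :: "nat \<Rightarrow> nat \<Rightarrow> real" where
  "neg_beta j = (\<lambda>m. - beta j m)"

lemma W_ms_eq:
  "W_ms a d E = (\<Sum>j\<in>{1..E}. \<Sum>i\<in>{E<..d}. replicate_mset 3 (beta_diff i j))
    + (\<Sum>j\<in>{1..E}. replicate_mset a (neg_beta j))"
proof -
  have "{E+1..d} = {E<..d}" by auto
  thus ?thesis by (simp add: W_ms_def beta_diff_def neg_beta_def)
qed

lemma beta_diff_inj:
  assumes "beta_diff i j = beta_diff i' j'" "j < i" "j' < i'"
  shows "i = i' \<and> j = j'"
proof -
  have a: "beta_diff i j i = beta_diff i' j' i" "beta_diff i j j = beta_diff i' j' j" using assms by auto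
  have "beta_diff i j i = 1" "beta_diff i j j = -1" using assms(2) by (auto simp: beta_diff_def beta_def)
  hence a1: "beta_diff i' j' i = 1" and a2: "beta_diff i' j' j = -1" using a by auto
  show ?thesis using a1 a2 by (auto simp: beta_diff_def beta_def split: if_splits)
qed

lemma beta_diff_ne_neg_beta:
  assumes "j < i"
  shows "beta_diff i j \<noteq> neg_beta j'"
proof
  assume "beta_diff i j = neg_beta j'"
  hence "beta_diff i j i = neg_beta j' i" by simp
  thus False using assms by (auto simp: beta_diff_def neg_beta_def beta_def split: if_splits)
qed

lemma neg_beta_inj: "neg_beta j = neg_beta j' \<Longrightarrow> j = j'"
proof -
  assume "neg_beta j = neg_beta j'"
  hence "neg_beta j j = neg_beta j' j" by simp
  thus "j = j'" by (auto simp: neg_beta_def beta_def split: if_splits)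
qed

lemma count_W_ms_beta_diff:
  assumes "i \<in> {E<..d}" "j \<in> {1..E}"
  shows "count (W_ms a d E) (beta_diff i j) = 3"
proof -
  have "count (W_ms a d E) (beta_diff i j) = (\<Sum>j'\<in>{1..E}. \<Sum>i'\<in>{E<..d}. if beta_diff i j = beta_diff i' j' then 3 else 0)
        + (\<Sum>j'\<in>{1..E}. if beta_diff i j = neg_beta j' then a else 0)"
    by (simp add: W_ms_eq count_sum)
  also have "(\<Sum>j'\<in>{1..E}. if beta_diff i j = neg_beta j' then a else 0) = 0"
    using beta_diff_ne_neg_beta[of j i] assms by simp
  also have "(\<Sum>j'\<in>{1..E}. \<Sum>i'\<in>{E<..d}. if beta_diff i j = beta_diff i' j' then 3 else (0::nat))
      = (\<Sum>j'\<in>{1..E}. \<Sum>i'\<in>{E<..d}. if i' = i \<and> j' = j then 3 else (0::nat))"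
  proof (intro sum.cong refl)
    fix j' i' assume "j' \<in> {1..E}" "i' \<in> {E<..d}"
    hence "j' < i'" by auto
    moreover have "j < i" using assms by auto
    ultimately show "(if beta_diff i j = beta_diff i' j' then 3 else 0) = (if i' = i \<and> j' = j then 3 else (0::nat))"
      using beta_diff_inj[of i j i' j'] by auto
  qed
  also have "\<dots> = 3"
  proof -
    have "\<And>j'. (\<Sum>i'\<in>{E<..d}. if i' = i \<and> j' = j then 3 else (0::nat)) = (if j' = j then 3 else 0)"
      using assms by (auto simp: sum.delta)
    hence "(\<Sum>j'\<in>{1..E}. \<Sum>i'\<in>{E<..d}. if i' = i \<and> j' = j then 3 else (0::nat)) = (\<Sum>j'\<in>{1..E}. if j' = j then 3 else 0)"
      by simp
    also have "\<dots> = 3" using assms by (simp add: sum.delta)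
    finally show ?thesis .
  qed
  finally show ?thesis by simp
qed

lemma count_W_ms_neg_beta:
  assumes "j \<in> {1..E}"
  shows "count (W_ms a d E) (neg_beta j) = a"
proof -
  have "count (W_ms a d E) (neg_beta j) = (\<Sum>j'\<in>{1..E}. \<Sum>i'\<in>{E<..d}. if neg_beta j = beta_diff i' j' then 3 else 0)
        + (\<Sum>j'\<in>{1..E}. if neg_beta j = neg_beta j' then a else 0)"
    by (simp add: W_ms_eq count_sum)
  also have "(\<Sum>j'\<in>{1..E}. \<Sum>i'\<in>{E<..d}. if neg_beta j = beta_diff i' j' then 3 else (0::nat)) = 0"
  proof (intro sum.neutral ballI)
    fix j' i' assume "j' \<in> {1..E}" "i' \<in> {E<..d}"
    hence "j' < i'" by auto
    thus "(if neg_beta j = beta_diff i' j' then 3 else (0::nat)) = 0" using beta_diff_ne_neg_beta[of j' i' j] by auto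
  qed
  also have "(\<Sum>j'\<in>{1..E}. if neg_beta j = neg_beta j' then a else 0) = (\<Sum>j'\<in>{1..E}. if j' = j then a else 0)"
    by (intro sum.cong refl) (auto dest: neg_beta_inj)
  also have "\<dots> = a" using assms by (simp add: sum.delta)
  finally show ?thesis by simp
qed

lemma set_mset_W_ms_subset:
  "set_mset (W_ms a d E) \<subseteq> (\<lambda>p. beta_diff (fst p) (snd p)) ` ({E<..d} \<times> {1..E}) \<union> neg_beta ` {1..E}"
proof
  fix x assume "x \<in># W_ms a d E"
  hence "(\<exists>j\<in>{1..E}. \<exists>i\<in>{E<..d}. x = beta_diff i j) \<or> (\<exists>j\<in>{1..E}. x = neg_beta j)"
    by (auto simp: W_ms_eq set_mset_sum split: if_splits)
  thus "x \<in> (\<lambda>p. beta_diff (fst p) (snd p)) ` ({E<..d} \<times> {1..E}) \<union> neg_beta ` {1..E}"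
  proof
    assume "\<exists>j\<in>{1..E}. \<exists>i\<in>{E<..d}. x = beta_diff i j"
    then obtain i j where "j \<in> {1..E}" "i \<in> {E<..d}" "x = beta_diff i j" by blast
    thus ?thesis by (intro UnI1 image_eqI[of _ _ "(i,j)"]) auto
  qed auto
qed

lemma sum_mset_subset_W_ms:
  fixes f :: "(nat \<Rightarrow> real) \<Rightarrow> real"
  assumes "I \<subseteq># W_ms a d E"
  shows "sum_mset (image_mset f I) = (\<Sum>i\<in>{E<..d}. \<Sum>j\<in>{1..E}. real (count I (beta_diff i j)) * f (beta_diff i j))
      + (\<Sum>j\<in>{1..E}. real (count I (neg_beta j)) * f (neg_beta j))"
proof -
  define Vs where "Vs = (\<lambda>p. beta_diff (fst p) (snd p)) ` ({E<..d} \<times> {1..E})"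
  define Ws where "Ws = neg_beta ` {1..E}"
  have sub: "set_mset I \<subseteq> Vs \<union> Ws"
    using set_mset_mono[OF assms] set_mset_W_ms_subset[of a d E] unfolding Vs_def Ws_def by blast
  have fin: "finite (Vs \<union> Ws)" unfolding Vs_def Ws_def by simp
  have disj: "Vs \<inter> Ws = {}" unfolding Vs_def Ws_def using beta_diff_ne_neg_beta by fastforce
  let ?c = "\<lambda>x. real (count I x) * f x"
  have "sum_mset (image_mset f I) = (\<Sum>x\<in>Vs \<union> Ws. ?c x)" using sum_mset_image_eq_sum_count[OF fin sub] .
  also have "\<dots> = (\<Sum>x\<in>Vs. ?c x) + (\<Sum>x\<in>Ws. ?c x)" using disj unfolding Vs_def Ws_def by (simp add: sum.union_disjoint)
  also have "(\<Sum>x\<in>Vs. ?c x) = (\<Sum>p\<in>{E<..d} \<times> {1..E}. ?c (beta_diff (fst p) (snd p)))"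
    unfolding Vs_def
  proof (rule sum.reindex[unfolded comp_def])
    show "inj_on (\<lambda>p. beta_diff (fst p) (snd p)) ({E<..d} \<times> {1..E})"
    proof (rule inj_onI)
      fix p q assume "p \<in> {E<..d} \<times> {1..E}" "q \<in> {E<..d} \<times> {1..E}" "beta_diff (fst p) (snd p) = beta_diff (fst q) (snd q)"
      thus "p = q" using beta_diff_inj[of "fst p" "snd p" "fst q" "snd q"] by (auto simp: prod_eq_iff)
    qed
  qed
  also have "\<dots> = (\<Sum>i\<in>{E<..d}. \<Sum>j\<in>{1..E}. ?c (beta_diff i j))" by (simp add: sum.cartesian_product case_prod_beta)
  also have "(\<Sum>x\<in>Ws. ?c x) = (\<Sum>j\<in>{1..E}. ?c (neg_beta j))"
    unfolding Ws_def by (rule sum.reindex[unfolded comp_def]) (auto intro: inj_onI neg_beta_inj)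
  finally show ?thesis .
qed

lemma sum_sum_if_mem:
  fixes F :: "nat \<Rightarrow> nat \<Rightarrow> real"
  assumes "finite D" "P \<subseteq> D" "Q \<subseteq> D"
  shows "(\<Sum>i\<in>D. \<Sum>j\<in>D. if i \<in> P \<and> j \<in> Q then F i j else 0) = (\<Sum>i\<in>P. \<Sum>j\<in>Q. F i j)"
proof -
  have "\<And>i. (\<Sum>j\<in>D. if i \<in> P \<and> j \<in> Q then F i j else 0) = (if i \<in> P then (\<Sum>j\<in>Q. F i j) else 0)"
  proof -
    fix i
    have "(\<Sum>j\<in>D. if j \<in> Q then F i j else 0) = (\<Sum>j\<in>D \<inter> Q. F i j)"
      using sum.inter_restrict[OF assms(1), of "F i" Q] by simp
    also have "D \<inter> Q = Q" using assms by auto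
    finally show "(\<Sum>j\<in>D. if i \<in> P \<and> j \<in> Q then F i j else 0) = (if i \<in> P then (\<Sum>j\<in>Q. F i j) else 0)"
      by (cases "i \<in> P") auto
  qed
  hence "(\<Sum>i\<in>D. \<Sum>j\<in>D. if i \<in> P \<and> j \<in> Q then F i j else 0) = (\<Sum>i\<in>D. if i \<in> P then (\<Sum>j\<in>Q. F i j) else 0)"
    by simp
  also have "\<dots> = (\<Sum>i\<in>D \<inter> P. \<Sum>j\<in>Q. F i j)"
    using sum.inter_restrict[OF assms(1), of "\<lambda>i. \<Sum>j\<in>Q. F i j" P] by simp
  also have "D \<inter> P = P" using assms by auto
  finally show ?thesis .
qed


lemma sum_sigma_ms_subset_W_ms:
  assumes "I \<subseteq># W_ms a d E"
  shows "(\<Sum>m\<in>{1..E}. sigma_ms I m) = - real (size I)"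
proof -
  have "(\<Sum>m\<in>{1..E}. b m) = -1" if "b \<in># I" for b
  proof -
    have beta: "(\<Sum>m\<in>{1..E}. beta i m) = (if i \<in> {1..E} then 1 else 0)" for i
      by (simp add: beta_apply sum.delta)
    have "b \<in> (\<lambda>p. beta_diff (fst p) (snd p)) ` ({E<..d} \<times> {1..E}) \<union> neg_beta ` {1..E}"
      using that set_mset_mono[OF assms] set_mset_W_ms_subset by blast
    then consider (diff) i j where "i \<in> {E<..d}" "j \<in> {1..E}" "b = beta_diff i j"
      | (neg) j where "j \<in> {1..E}" "b = neg_beta j"
      by auto
    thus ?thesis
    proof cases
      case diff
      thus ?thesis using beta[of i] beta[of j] by (simp add: beta_diff_def sum_subtractf)
    next
      case neg
      thus ?thesis using beta[of j] by (simp add: neg_beta_def sum_negf)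
    qed
  qed
  hence "image_mset (\<lambda>b. \<Sum>m\<in>{1..E}. b m) I = image_mset (\<lambda>_. -1) I"
    by (intro image_mset_cong) simp
  thus ?thesis
    unfolding sigma_ms_def sum_sum_mset_swap by (simp add: image_mset_const_eq)
qed

lemma sigma_ms_eq_net_flow:
  assumes I: "I \<subseteq># W_ms a d E" and Ed: "E \<le> d" and m: "m \<in> {1..d}"
  shows "sigma_ms I m = net_flow {1..d} (\<lambda>i j. if i \<in> {E<..d} \<and> j \<in> {1..E} then real (count I (beta_diff i j)) else 0) m
    - (if m \<in> {1..E} then real (count I (neg_beta m)) else 0)"
proof -
  define P where "P = {E<..d}"
  define Q where "Q = {1..E}"
  define K where "K = (\<lambda>i j. if i \<in> P \<and> j \<in> Q then real (count I (beta_diff i j)) else 0)"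
  have PD: "P \<subseteq> {1..d}" and QD: "Q \<subseteq> {1..d}" using Ed unfolding P_def Q_def by auto
  have "sigma_ms I m = (\<Sum>i\<in>P. \<Sum>j\<in>Q. real (count I (beta_diff i j)) * (beta i m - beta j m))
      + (\<Sum>j\<in>Q. real (count I (neg_beta j)) * (- beta j m))"
    using sum_mset_subset_W_ms[OF I, of "\<lambda>b. b m"] unfolding sigma_ms_def P_def Q_def
    by (simp add: beta_diff_def neg_beta_def)
  also have "(\<Sum>i\<in>P. \<Sum>j\<in>Q. real (count I (beta_diff i j)) * (beta i m - beta j m))
      = (\<Sum>i\<in>{1..d}. \<Sum>j\<in>{1..d}. K i j * (beta i m - beta j m))"
    using sum_sum_if_mem[OF _ PD QD, of "\<lambda>i j. real (count I (beta_diff i j)) * (beta i m - beta j m)"]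
    unfolding K_def by (simp add: if_distrib[of "\<lambda>z. z * _"] cong: if_cong)
  also have "\<dots> = net_flow {1..d} K m" using sum_beta_diff_eq_net_flow m by simp
  also have "(\<Sum>j\<in>Q. real (count I (neg_beta j)) * (- beta j m)) = - (if m \<in> Q then real (count I (neg_beta m)) else 0)"
    unfolding Q_def by (simp add: beta_apply sum_negf[symmetric] if_distrib cong: if_cong)
  finally show ?thesis unfolding K_def P_def Q_def by simp
qed

text \<open>Subtracting sigma_I from a point with an e-decomposition at E lowers the saturated flows on
  the edges from {E+1..d} to {1..E} by at most 3 and raises the box entries of {1..E} by at most a,
  so what remains is a signed lower triangular flow with values in [-3/2, 3/2] plus a box part
  that still lies in [-(a+2)/2, a/2].\<close>

lemma diff_sigma_ms_signed_flow:
  assumes flow: "e_flow a d x E C cc" and Ed: "E \<le> d" and I: "I \<subseteq># W_ms a d E"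
  obtains D g where "\<forall>i j. -(3/2) \<le> D i j \<and> D i j \<le> 3/2" "\<forall>i j. D i j \<noteq> 0 \<longrightarrow> j < i"
    "\<forall>m. -(real a + 2)/2 \<le> g m \<and> g m \<le> real a / 2" "\<forall>m\<in>{1..d}. cc m \<le> g m"
    "\<forall>m\<in>{1..d}. x m - sigma_ms I m = net_flow {1..d} D m + g m"
proof -
  have C: "\<forall>i j. 0 \<le> C i j \<and> C i j \<le> 3/2" and lower: "\<forall>i j. C i j \<noteq> 0 \<longrightarrow> j < i"
    and sat: "\<forall>i j. j \<le> E \<longrightarrow> E < i \<longrightarrow> C i j = 3/2"
    and low: "\<forall>i. 1 \<le> i \<longrightarrow> i \<le> E \<longrightarrow> -(real a + 2)/2 \<le> cc i \<and> cc i \<le> - real a / 2"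
    and high: "\<forall>i. E < i \<longrightarrow> i \<le> d \<longrightarrow> - real a / 2 < cc i \<and> cc i \<le> real a / 2"
    and x: "\<forall>m\<in>{1..d}. x m = net_flow {1..d} C m + cc m"
    using flow unfolding e_flow_def by auto
  define P where "P = {E<..d}"
  define Q where "Q = {1..E}"
  define K where "K = (\<lambda>i j. if i \<in> P \<and> j \<in> Q then real (count I (beta_diff i j)) else 0)"
  define kq where "kq = (\<lambda>m. if m \<in> Q then real (count I (neg_beta m)) else 0)"
  have K: "0 \<le> K i j \<and> K i j \<le> 3" for i j
    using mset_subset_eq_count[OF I, of "beta_diff i j"] count_W_ms_beta_diff[of i E d j a]
    unfolding K_def P_def Q_def by auto
  have kq: "0 \<le> kq m \<and> kq m \<le> real a" for m
    using mset_subset_eq_count[OF I, of "neg_beta m"] count_W_ms_neg_beta[of m E a d]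
    unfolding kq_def Q_def by auto
  have sigma: "sigma_ms I m = net_flow {1..d} K m - kq m" if "m \<in> {1..d}" for m
    using sigma_ms_eq_net_flow[OF I Ed that] unfolding K_def kq_def P_def Q_def .
  define D where "D = (\<lambda>i j. C i j - K i j)"
  define g where "g = (\<lambda>m. if m \<in> {1..d} then cc m + kq m else 0)"
  have "-(3/2) \<le> D i j \<and> D i j \<le> 3/2" for i j
  proof (cases "i \<in> P \<and> j \<in> Q")
    case True
    hence "C i j = 3/2" using sat unfolding P_def Q_def by auto
    thus ?thesis using K[of i j] unfolding D_def by simp
  next
    case False
    have "0 \<le> C i j" "C i j \<le> 3/2" using C by auto
    thus ?thesis using False unfolding D_def K_def by auto
  qed
  moreover have "\<forall>i j. D i j \<noteq> 0 \<longrightarrow> j < i"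
    using lower unfolding D_def K_def P_def Q_def by auto
  moreover have "\<forall>m. -(real a + 2)/2 \<le> g m \<and> g m \<le> real a / 2"
  proof
    fix m
    consider "m \<notin> {1..d}" | "m \<in> {1..d}" "m \<le> E" | "m \<in> {1..d}" "E < m" by linarith
    thus "-(real a + 2)/2 \<le> g m \<and> g m \<le> real a / 2"
    proof cases
      case 1 thus ?thesis by (simp add: g_def del: atLeastAtMost_iff)
    next
      case 2 thus ?thesis using low[rule_format, of m] kq[of m] by (auto simp: g_def)
    next
      case 3 thus ?thesis using high[rule_format, of m] by (simp add: g_def kq_def Q_def)
    qed
  qed
  moreover have "\<forall>m\<in>{1..d}. cc m \<le> g m"
    using kq unfolding g_def by simp
  moreover have "\<forall>m\<in>{1..d}. x m - sigma_ms I m = net_flow {1..d} D m + g m"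
    using x sigma by (simp add: D_def g_def net_flow_def sum_subtractf)
  ultimately show ?thesis by (intro that[of D g]) blast+
qed

lemma flow_rep_diff_sigma_ms:
  assumes "e_flow a d x E C cc" "E \<le> d" "I \<subseteq># W_ms a d E"
  shows "flow_rep a d (\<lambda>m. x m - sigma_ms I m)"
proof -
  obtain D g where "\<forall>i j. -(3/2) \<le> D i j \<and> D i j \<le> 3/2" "\<forall>i j. D i j \<noteq> 0 \<longrightarrow> j < i"
    "\<forall>m. -(real a + 2)/2 \<le> g m \<and> g m \<le> real a / 2" "\<forall>m\<in>{1..d}. cc m \<le> g m"
    "\<forall>m\<in>{1..d}. x m - sigma_ms I m = net_flow {1..d} D m + g m"
    by (rule diff_sigma_ms_signed_flow[OF assms])
  from this(1-3,5) show ?thesis by (rule flow_rep_signed)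
qed

lemma e_flow_sum_box_ge:
  assumes flow: "e_flow a d x e C cc" and S: "S \<subseteq> {1..d}"
  shows "(\<Sum>m\<in>{1..e}. cc m + real a / 2) \<le> (\<Sum>m\<in>S. cc m + real a / 2)"
    and "\<not> S \<subseteq> {1..e} \<Longrightarrow> (\<Sum>m\<in>{1..e}. cc m + real a / 2) < (\<Sum>m\<in>S. cc m + real a / 2)"
proof -
  define h where "h = (\<lambda>m. cc m + real a / 2)"
  have low: "h m \<le> 0" if "m \<in> {1..e} - S" for m
    using flow that unfolding e_flow_def h_def by auto
  have high: "h m > 0" if "m \<in> S - {1..e}" for m
  proof -
    have "e < m" "m \<le> d" using that S by auto
    thus ?thesis using flow unfolding e_flow_def h_def by auto
  qed
  have fS: "finite S" using S finite_subset by blast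
  have split: "(\<Sum>m\<in>S. h m) = (\<Sum>m\<in>S \<inter> {1..e}. h m) + (\<Sum>m\<in>S - {1..e}. h m)"
    "(\<Sum>m\<in>{1..e}. h m) = (\<Sum>m\<in>S \<inter> {1..e}. h m) + (\<Sum>m\<in>{1..e} - S. h m)"
    using fS by (metis sum.Int_Diff, metis inf.commute sum.Int_Diff finite_atLeastAtMost)
  have "(\<Sum>m\<in>{1..e} - S. h m) \<le> 0" using low by (intro sum_nonpos) auto
  moreover have "(\<Sum>m\<in>S - {1..e}. h m) \<ge> 0" using high by (intro sum_nonneg) (auto intro: less_imp_le)
  ultimately show "(\<Sum>m\<in>{1..e}. cc m + real a / 2) \<le> (\<Sum>m\<in>S. cc m + real a / 2)"
    using split unfolding h_def by linarith
  assume "\<not> S \<subseteq> {1..e}"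
  hence "(\<Sum>m\<in>S - {1..e}. h m) > 0" using fS high by (intro sum_pos) auto
  thus "(\<Sum>m\<in>{1..e}. cc m + real a / 2) < (\<Sum>m\<in>S. cc m + real a / 2)"
    using split \<open>(\<Sum>m\<in>{1..e} - S. h m) \<le> 0\<close> unfolding h_def by linarith
qed

lemma prefix_pot_le_sum_diff_sigma_ms:
  assumes flow: "e_flow a d x E C cc" and Ed: "E \<le> d" and I: "I \<subseteq># W_ms a d E"
    and S: "S \<subseteq> {1..d}"
  defines "q \<equiv> (\<Sum>m\<in>S. x m - sigma_ms I m) + (3/2) * real (card S) * (real d - real (card S))
      + (real a / 2) * real (card S)"
  shows "prefix_pot a d x E \<le> q" and "prefix_pot a d x E = q \<Longrightarrow> S \<subseteq> {1..E}"
proof -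
  obtain D g where D: "\<forall>i j. -(3/2) \<le> D i j \<and> D i j \<le> 3/2" "\<forall>i j. D i j \<noteq> 0 \<longrightarrow> j < i"
    and "\<forall>m. -(real a + 2)/2 \<le> g m \<and> g m \<le> real a / 2"
    and g: "\<forall>m\<in>{1..d}. cc m \<le> g m" and y: "\<forall>m\<in>{1..d}. x m - sigma_ms I m = net_flow {1..d} D m + g m"
    by (rule diff_sigma_ms_signed_flow[OF flow Ed I])
  have "(\<Sum>m\<in>S. x m - sigma_ms I m) = (\<Sum>m\<in>S. net_flow {1..d} D m) + (\<Sum>m\<in>S. g m)"
    using y S by (simp add: sum.distrib[symmetric] subset_iff)
  moreover have "(\<Sum>m\<in>S. net_flow {1..d} D m) \<ge> -(3/2) * real (card S) * (real d - real (card S))"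
    using sum_net_flow_lower_bound[of D S d] D S by blast
  moreover have "(\<Sum>m\<in>S. g m) \<ge> (\<Sum>m\<in>S. cc m)" using g S by (intro sum_mono) auto
  moreover have "(\<Sum>m\<in>S. cc m + real a / 2) = (\<Sum>m\<in>S. cc m) + (real a / 2) * real (card S)"
    by (simp add: sum.distrib mult.commute)
  ultimately have box: "(\<Sum>m\<in>S. cc m + real a / 2) \<le> q" unfolding q_def by linarith
  have pot: "prefix_pot a d x E = (\<Sum>m\<in>{1..E}. cc m + real a / 2)"
    using e_flow_prefix_pot(2)[OF flow Ed] by simp
  show "prefix_pot a d x E \<le> q"
    using box pot e_flow_sum_box_ge(1)[OF flow S] by linarith
  show "S \<subseteq> {1..E}" if "prefix_pot a d x E = q"
  proof (rule ccontr)
    assume "\<not> S \<subseteq> {1..E}"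
    from e_flow_sum_box_ge(2)[OF flow S this] show False using box pot that by linarith
  qed
qed

lemma bij_betw_prefix_image:
  assumes w: "bij_betw w {1..d} {1..d}" and l: "l \<le> d" and z: "\<forall>m\<in>{1..d}. z m = y (w m)"
  shows "(\<Sum>i\<in>{1..l}. z i) = (\<Sum>m\<in>w ` {1..l}. y m)" and "card (w ` {1..l}) = l"
    and "w ` {1..l} \<subseteq> {1..d}"
proof -
  have inj: "inj_on w {1..l}"
    using l bij_betw_imp_inj_on[OF w] by (rule_tac inj_on_subset) auto
  have "(\<Sum>m\<in>w ` {1..l}. y m) = (\<Sum>i\<in>{1..l}. y (w i))"
    using sum.reindex[OF inj, of y] by simp
  also have "\<dots> = (\<Sum>i\<in>{1..l}. z i)"
    using l z by (intro sum.cong) auto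
  finally show "(\<Sum>i\<in>{1..l}. z i) = (\<Sum>m\<in>w ` {1..l}. y m)" ..
  show "card (w ` {1..l}) = l" using inj by (simp add: card_image)
  show "w ` {1..l} \<subseteq> {1..d}" using l bij_betwE[OF w] by auto
qed

lemma p_l_rearranged_diff_sigma_ms:
  assumes chi'_dom: "dominant_weight d chi'" and chi'_V: "shifted d mu chi' \<in> Vzon a d"
    and I: "I \<subseteq># W_ms a d (e_of a d mu chi')"
    and w: "bij_betw w {1..d} {1..d}"
    and psi: "\<forall>m\<in>{1..d}. psi m + rho d m = chi' (w m) - sigma_ms I (w m) + rho d (w m)"
  shows "shifted d mu psi \<in> Vzon a d"
    and "l \<le> d \<Longrightarrow> p_of a d mu chi' \<le> p_l a d mu l psi"
    and "l \<le> d \<Longrightarrow> p_l a d mu l psi = p_of a d mu chi' \<Longrightarrow> l \<le> e_of a d mu chi'"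
    and "I \<noteq> {#} \<Longrightarrow> l \<le> d \<Longrightarrow> p_l a d mu l psi = p_of a d mu chi' \<Longrightarrow> l < e_of a d mu chi'"
proof -
  define E where "E = e_of a d mu chi'"
  define x' where "x' = shifted d mu chi'"
  define y where "y = (\<lambda>m. x' m - sigma_ms I m)"
  obtain C cc where Ed: "E \<le> d" and flow: "e_flow a d x' E C cc"
    using e_of_e_flow[OF chi'_dom chi'_V] unfolding E_def x'_def by blast
  have I: "I \<subseteq># W_ms a d E" using I unfolding E_def .
  have pchi': "p_of a d mu chi' = prefix_pot a d x' E"
    unfolding p_of_def p_l_eq_prefix_pot E_def x'_def ..
  have xp: "\<forall>m\<in>{1..d}. shifted d mu psi m = y (w m)"
    using psi unfolding y_def x'_def shifted_def delta_def by (simp add: algebra_simps)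
  show "shifted d mu psi \<in> Vzon a d"
    using in_Vzon_if_flow_rep flow_rep_permute[OF flow_rep_diff_sigma_ms[OF flow Ed I] w] xp
    unfolding y_def by blast
  have prefix: "p_l a d mu l psi = (\<Sum>m\<in>w ` {1..l}. y m) + (3/2) * real l * (real d - real l) + (real a / 2) * real l"
    and card: "card (w ` {1..l}) = l" and sub: "w ` {1..l} \<subseteq> {1..d}" if "l \<le> d" for l
    using bij_betw_prefix_image[OF w that xp] by (simp_all add: p_l_def)
  show "l \<le> d \<Longrightarrow> p_of a d mu chi' \<le> p_l a d mu l psi"
    using prefix_pot_le_sum_diff_sigma_ms(1)[OF flow Ed I sub] prefix card pchi'
    unfolding y_def by simp
  have onto_E: "w ` {1..l} \<subseteq> {1..E}" if "l \<le> d" "p_l a d mu l psi = p_of a d mu chi'" for l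
    using prefix_pot_le_sum_diff_sigma_ms(2)[OF flow Ed I sub[OF that(1)]] prefix[OF that(1)]
      card[OF that(1)] pchi' that(2)
    unfolding y_def by simp
  show le: "l \<le> E" if "l \<le> d" "p_l a d mu l psi = p_of a d mu chi'" for l
    using card_mono[OF _ onto_E[OF that]] card[OF that(1)] by simp
  show "l < E" if "I \<noteq> {#}" "l \<le> d" "p_l a d mu l psi = p_of a d mu chi'"
  proof (rule ccontr)
    \<comment> \<open>for l = E the coordinates are exactly {1..E}, on which sigma_I sums to -size I\<close>
    assume "\<not> l < E"
    hence lE: "l = E" using le[OF that(2,3)] by simp
    have "w ` {1..E} = {1..E}"
      using onto_E[OF that(2,3)] card[OF Ed] lE by (intro card_subset_eq) auto
    hence "p_l a d mu E psi = prefix_pot a d x' E + real (size I)"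
      using prefix[OF Ed] sum_sigma_ms_subset_W_ms[OF I]
      unfolding y_def prefix_pot_def by (simp add: sum_subtractf)
    moreover have "size I > 0" using that(1) by (simp add: nonempty_has_size)
    ultimately show False using that(3) lE pchi' by simp
  qed
qed

theorem proposition3p8:
  fixes a d :: nat and mu :: real
    and chi chi' psi :: "nat \<Rightarrow> real"
    and I :: "(nat \<Rightarrow> real) multiset"
  assumes chi_dom: "dominant_weight d chi"
    and chi'_dom: "dominant_weight d chi'"
    and chi_V: "shifted d mu chi \<in> Vzon a d"
    and chi'_V: "shifted d mu chi' \<in> Vzon a d"
    and I_sub: "I \<subseteq># W_ms a d (e_of a d mu chi')"
    and distinct: "inj_on (\<lambda>m. chi' m - sigma_ms I m + rho d m) {1..d}"
    and psi_dom: "dominant_weight d psi"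
    and psi_perm: "\<exists>w. bij_betw w {1..d} {1..d} \<and>
        (\<forall>m\<in>{1..d}. psi m + rho d m = chi' (w m) - sigma_ms I (w m) + rho d (w m))"
    and cases: "p_of a d mu chi' > p_of a d mu chi
      \<or> (p_of a d mu chi' = p_of a d mu chi \<and> e_of a d mu chi' < e_of a d mu chi)
      \<or> (p_of a d mu chi' = p_of a d mu chi \<and> e_of a d mu chi' = e_of a d mu chi \<and> I \<noteq> {#})"
  shows "shifted d mu psi \<in> Vzon a d
    \<and> p_l a d mu (e_of a d mu chi) psi \<ge> p_of a d mu psi
    \<and> p_of a d mu psi \<ge> p_of a d mu chi
    \<and> (p_of a d mu psi = p_of a d mu chi \<longrightarrow>
          p_of a d mu chi' = p_of a d mu chi
        \<and> e_of a d mu psi \<le> e_of a d mu chi'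
        \<and> (I \<noteq> {#} \<longrightarrow> e_of a d mu psi < e_of a d mu chi')
        \<and> e_of a d mu psi < e_of a d mu chi
        \<and> p_l a d mu (e_of a d mu chi) psi > p_of a d mu psi)
    \<and> (\<Sum>i\<in>{1..e_of a d mu chi}. psi i) > (\<Sum>i\<in>{1..e_of a d mu chi}. chi i)"
proof -
  \<comment> \<open>distinct only ensures that psi is well defined; here psi and w are given\<close>
  obtain w where w: "bij_betw w {1..d} {1..d}"
    "\<forall>m\<in>{1..d}. psi m + rho d m = chi' (w m) - sigma_ms I (w m) + rho d (w m)"
    using psi_perm by blast
  note psi = p_l_rearranged_diff_sigma_ms[OF chi'_dom chi'_V I_sub w]
  define e e' e'' where "e = e_of a d mu chi" and "e' = e_of a d mu chi'" and "e'' = e_of a d mu psi"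
  have "e \<le> d" "e'' \<le> d"
    using e_of_le[OF chi_dom chi_V] e_of_le[OF psi_dom psi(1)] unfolding e_def e''_def .
  note psi_min = p_of_le_p_l[OF psi_dom psi(1) \<open>e \<le> d\<close>]
  have p_psi: "p_of a d mu psi = p_l a d mu e'' psi" by (simp add: p_of_def e''_def)
  have chain: "p_of a d mu chi \<le> p_of a d mu chi'" "p_of a d mu chi' \<le> p_of a d mu psi"
    using cases psi(2)[OF \<open>e'' \<le> d\<close>] p_psi by auto
  have equality: "p_of a d mu chi' = p_of a d mu chi \<and> e'' \<le> e' \<and> (I \<noteq> {#} \<longrightarrow> e'' < e')
      \<and> e'' < e \<and> p_of a d mu psi < p_l a d mu e psi" if "p_of a d mu psi = p_of a d mu chi"
  proof -
    have "p_l a d mu e'' psi = p_of a d mu chi'" using that chain p_psi by linarith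
    hence "e'' \<le> e'" "I \<noteq> {#} \<longrightarrow> e'' < e'"
      using psi(3)[OF \<open>e'' \<le> d\<close>] psi(4)[OF _ \<open>e'' \<le> d\<close>] unfolding e'_def by auto
    moreover have "p_of a d mu chi' = p_of a d mu chi" using that chain by linarith
    ultimately show ?thesis
      using cases psi_min(2) unfolding e_def e'_def e''_def by auto
  qed
  have "p_l a d mu e chi < p_l a d mu e psi"
    using chain psi_min(1) equality unfolding p_of_def e_def by fastforce
  moreover have "p_l a d mu e psi - p_l a d mu e chi = (\<Sum>i\<in>{1..e}. psi i) - (\<Sum>i\<in>{1..e}. chi i)"
    by (simp add: p_l_def shifted_def sum.distrib)
  ultimately show ?thesis
    using psi(1) psi_min(1) chain equality unfolding e_def e'_def e''_def by force
qed

end
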